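(* Let $\mathcal{N}$ be an exact category and $k\ge 1$. Regarding a binary acyclic complex supported on $[0,k]$ as one supported on $[0,k+1]$ induces a well-defined homomorphism $L_1^k(\mathcal{N})\to K_1^{k+1}(\mathcal{N})$, and the homomorphism $i_k\colon L_1^k(\mathcal{N})\to L_1^{k+1}(\mathcal{N})$ (induced by the same assignment) factors as this homomorphism followed by the canonical epimorphism $K_1^{k+1}(\mathcal{N})\twoheadrightarrow L_1^{k+1}(\mathcal{N})$.
   Context: A binary acyclic complex $\mathbb{P}=(P_*,d,d')$ in $\mathcal{N}$ is a graded object $P_*$ of $\mathcal{N}$ supported on a finite subset of $[0,\infty)$, together with two degree $-1$ maps $d,d'$ (top and bottom differentials) such that both $\mathbb{P}^\top=(P_*,d)$ and $\mathbb{P}^\bot=(P_*,d')$ are acyclic chain complexes (each differential $P_n\to P_{n-1}$ factors as an admissible epimorphism $P_n\twoheadrightarrow J_{n-1}$ followed by an admissible monomorphism $J_{n-1}\rightarrowtail P_{n-1}$ with $J_n\rightarrowtail P_n\twoheadrightarrow J_{n-1}$ short exact for all $n$). It is diagonal if $d=d'$. Morphisms are degree-$0$ maps that are chain maps for both differentials; with degreewise short exact sequences these form an exact category. For $k\ge0$, $B_1^k(\mathcal{N})$ is the Grothendieck group of the exact category of binary acyclic complexes supported on $[0,k]$, and $K_1^k(\mathcal{N})$ is its quotient by classes of diagonal complexes. For isomorphisms $\alpha,\beta\colon P\to Q$, $\langle\alpha,\beta\rangle$ is the class of the binary complex with $P$ in degree $1$, $Q$ in degree $0$, top differential $\alpha$,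 bottom differential $\beta$. A binary ladder is $(\mathbb{P},\mathbb{Q},\sigma,\tau)$ with $\sigma\colon\mathbb{P}^\top\to\mathbb{Q}^\top$, $\tau\colon\mathbb{P}^\bot\to\mathbb{Q}^\bot$ chain isomorphisms. For $k\ge1$, $L_1^k(\mathcal{N})$ is the quotient of $K_1^k(\mathcal{N})$ by the relations $\mathbb{Q}-\mathbb{P}=\sum_{i=0}^k(-1)^i\langle\sigma_i,\tau_i\rangle$ for all binary ladders with $\mathbb{P},\mathbb{Q}$ supported on $[0,k]$, $P_i=Q_i$ for all $i$, and all $\sigma_i,\tau_i$ involutions. *)

theory Defs
  imports "HOL-Algebra.Free_Abelian_Groups" "HOL-Algebra.Coset" "HOL-Algebra.Generated_Groups"
begin

record ('o, 'm) excat =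
  Ob :: "'o set"
  Mor :: "'m set"
  dom :: "'m \<Rightarrow> 'o"
  cod :: "'m \<Rightarrow> 'o"
  comp :: "'m \<Rightarrow> 'm \<Rightarrow> 'm"   (* comp g f = g after f *)
  idm :: "'o \<Rightarrow> 'm"
  madd :: "'m \<Rightarrow> 'm \<Rightarrow> 'm"
  zmor :: "'o \<Rightarrow> 'o \<Rightarrow> 'm"
  confl :: "('m \<times> 'm) set"      (* conflations (i, p) *)

definition homs :: "('o,'m) excat \<Rightarrow> 'o \<Rightarrow> 'o \<Rightarrow> 'm set" where
  "homs C X Y = {f \<in> Mor C. dom C f = X \<and> cod C f = Y}"

definition is_category :: "('o,'m) excat \<Rightarrow> bool" where
  "is_category C \<longleftrightarrow>
     (\<forall>f\<in>Mor C. dom C f \<in> Ob C \<and> cod C f \<in> Ob C) \<and>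
     (\<forall>X\<in>Ob C. idm C X \<in> homs C X X) \<and>
     (\<forall>X Y Z f g. f \<in> homs C X Y \<longrightarrow> g \<in> homs C Y Z \<longrightarrow> comp C g f \<in> homs C X Z) \<and>
     (\<forall>X Y f. f \<in> homs C X Y \<longrightarrow> comp C f (idm C X) = f \<and> comp C (idm C Y) f = f) \<and>
     (\<forall>W X Y Z f g h. f \<in> homs C W X \<longrightarrow> g \<in> homs C X Y \<longrightarrow> h \<in> homs C Y Z \<longrightarrow>
        comp C h (comp C g f) = comp C (comp C h g) f)"

definition is_preadditive :: "('o,'m) excat \<Rightarrow> bool" where
  "is_preadditive C \<longleftrightarrow> is_category C \<and>
     (\<forall>X\<in>Ob C. \<forall>Y\<in>Ob C. zmor C X Y \<in> homs C X Y) \<and>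
     (\<forall>X Y f g. f \<in> homs C X Y \<longrightarrow> g \<in> homs C X Y \<longrightarrow> madd C f g \<in> homs C X Y) \<and>
     (\<forall>X Y f g h. f \<in> homs C X Y \<longrightarrow> g \<in> homs C X Y \<longrightarrow> h \<in> homs C X Y \<longrightarrow>
        madd C (madd C f g) h = madd C f (madd C g h)) \<and>
     (\<forall>X Y f g. f \<in> homs C X Y \<longrightarrow> g \<in> homs C X Y \<longrightarrow> madd C f g = madd C g f) \<and>
     (\<forall>X Y f. f \<in> homs C X Y \<longrightarrow> madd C f (zmor C X Y) = f) \<and>
     (\<forall>X Y f. f \<in> homs C X Y \<longrightarrow> (\<exists>g \<in> homs C X Y. madd C f g = zmor C X Y)) \<and>
     (\<forall>X Y Z f g h. f \<in> homs C X Y \<longrightarrow> g \<in> homs C X Y \<longrightarrow> h \<in> homs C Y Z \<longrightarrow>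
        comp C h (madd C f g) = madd C (comp C h f) (comp C h g)) \<and>
     (\<forall>W X Y f g h. h \<in> homs C W X \<longrightarrow> f \<in> homs C X Y \<longrightarrow> g \<in> homs C X Y \<longrightarrow>
        comp C (madd C f g) h = madd C (comp C f h) (comp C g h))"

definition is_zero_obj :: "('o,'m) excat \<Rightarrow> 'o \<Rightarrow> bool" where
  "is_zero_obj C Z \<longleftrightarrow> Z \<in> Ob C \<and>
     (\<forall>X\<in>Ob C. (\<exists>!f. f \<in> homs C X Z) \<and> (\<exists>!f. f \<in> homs C Z X))"

definition is_additive :: "('o,'m) excat \<Rightarrow> bool" where
  "is_additive C \<longleftrightarrow> is_preadditive C \<and> (\<exists>Z. is_zero_obj C Z) \<and>
     (\<forall>A\<in>Ob C. \<forall>B\<in>Ob C. \<exists>S i1 i2 p1 p2.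
        i1 \<in> homs C A S \<and> i2 \<in> homs C B S \<and> p1 \<in> homs C S A \<and> p2 \<in> homs C S B \<and>
        comp C p1 i1 = idm C A \<and> comp C p2 i2 = idm C B \<and>
        comp C p2 i1 = zmor C A B \<and> comp C p1 i2 = zmor C B A \<and>
        madd C (comp C i1 p1) (comp C i2 p2) = idm C S)"

definition is_iso :: "('o,'m) excat \<Rightarrow> 'm \<Rightarrow> bool" where
  "is_iso C f \<longleftrightarrow> f \<in> Mor C \<and> (\<exists>g \<in> homs C (cod C f) (dom C f).
      comp C g f = idm C (dom C f) \<and> comp C f g = idm C (cod C f))"

definition is_kernel_cokernel_pair :: "('o,'m) excat \<Rightarrow> 'm \<Rightarrow> 'm \<Rightarrow> bool" where
  "is_kernel_cokernel_pair C i p \<longleftrightarrow> i \<in> Mor C \<and> p \<in> Mor C \<and> cod C i = dom C p \<and>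
     comp C p i = zmor C (dom C i) (cod C p) \<and>
     (\<forall>X\<in>Ob C. \<forall>f \<in> homs C X (dom C p). comp C p f = zmor C X (cod C p) \<longrightarrow>
        (\<exists>!g. g \<in> homs C X (dom C i) \<and> comp C i g = f)) \<and>
     (\<forall>X\<in>Ob C. \<forall>f \<in> homs C (cod C i) X. comp C f i = zmor C (dom C i) X \<longrightarrow>
        (\<exists>!g. g \<in> homs C (cod C p) X \<and> comp C g p = f))"

definition adm_mono :: "('o,'m) excat \<Rightarrow> 'm \<Rightarrow> bool" where
  "adm_mono C i \<longleftrightarrow> (\<exists>p. (i, p) \<in> confl C)"

definition adm_epi :: "('o,'m) excat \<Rightarrow> 'm \<Rightarrow> bool" where
  "adm_epi C p \<longleftrightarrow> (\<exists>i. (i, p) \<in> confl C)"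

definition is_pushout :: "('o,'m) excat \<Rightarrow> 'm \<Rightarrow> 'm \<Rightarrow> 'm \<Rightarrow> 'm \<Rightarrow> bool" where
  "is_pushout C i f i' f' \<longleftrightarrow>
     i \<in> Mor C \<and> f \<in> Mor C \<and> i' \<in> Mor C \<and> f' \<in> Mor C \<and>
     dom C i = dom C f \<and> cod C f = dom C i' \<and> cod C i = dom C f' \<and> cod C i' = cod C f' \<and>
     comp C f' i = comp C i' f \<and>
     (\<forall>X\<in>Ob C. \<forall>g \<in> homs C (cod C i) X. \<forall>h \<in> homs C (cod C f) X. comp C g i = comp C h f \<longrightarrow>
        (\<exists>!u. u \<in> homs C (cod C f') X \<and> comp C u f' = g \<and> comp C u i' = h))"

definition is_pullback :: "('o,'m) excat \<Rightarrow> 'm \<Rightarrow> 'm \<Rightarrow> 'm \<Rightarrow> 'm \<Rightarrow> bool" where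
  "is_pullback C p f p' f' \<longleftrightarrow>
     p \<in> Mor C \<and> f \<in> Mor C \<and> p' \<in> Mor C \<and> f' \<in> Mor C \<and>
     cod C p = cod C f \<and> dom C f = cod C p' \<and> dom C p = cod C f' \<and> dom C p' = dom C f' \<and>
     comp C p f' = comp C f p' \<and>
     (\<forall>X\<in>Ob C. \<forall>g \<in> homs C X (dom C p). \<forall>h \<in> homs C X (dom C f). comp C p g = comp C f h \<longrightarrow>
        (\<exists>!u. u \<in> homs C X (dom C f') \<and> comp C f' u = g \<and> comp C p' u = h))"

definition exact_category :: "('o,'m) excat \<Rightarrow> bool" where
  "exact_category C \<longleftrightarrow> is_additive C \<and>
     (\<forall>(i, p) \<in> confl C. is_kernel_cokernel_pair C i p) \<and>
     \<comment> \<open>closed under isomorphisms of kernel-cokernel pairs\<close>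
     (\<forall>i p i' p' a b c. (i, p) \<in> confl C \<longrightarrow> is_kernel_cokernel_pair C i' p' \<longrightarrow>
        a \<in> homs C (dom C i) (dom C i') \<longrightarrow> b \<in> homs C (cod C i) (cod C i') \<longrightarrow>
        c \<in> homs C (cod C p) (cod C p') \<longrightarrow> is_iso C a \<longrightarrow> is_iso C b \<longrightarrow> is_iso C c \<longrightarrow>
        comp C i' a = comp C b i \<longrightarrow> comp C p' b = comp C c p \<longrightarrow> (i', p') \<in> confl C) \<and>
     \<comment> \<open>E0, E0op\<close>
     (\<forall>X\<in>Ob C. adm_mono C (idm C X) \<and> adm_epi C (idm C X)) \<and>
     \<comment> \<open>E1, E1op\<close>
     (\<forall>i j. adm_mono C i \<longrightarrow> adm_mono C j \<longrightarrow> cod C i = dom C j \<longrightarrow> adm_mono C (comp C j i)) \<and>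
     (\<forall>p q. adm_epi C p \<longrightarrow> adm_epi C q \<longrightarrow> cod C p = dom C q \<longrightarrow> adm_epi C (comp C q p)) \<and>
     \<comment> \<open>E2: pushouts along admissible monos\<close>
     (\<forall>i f. adm_mono C i \<longrightarrow> f \<in> Mor C \<longrightarrow> dom C f = dom C i \<longrightarrow>
        (\<exists>i' f'. is_pushout C i f i' f' \<and> adm_mono C i')) \<and>
     \<comment> \<open>E2op: pullbacks along admissible epis\<close>
     (\<forall>p f. adm_epi C p \<longrightarrow> f \<in> Mor C \<longrightarrow> cod C f = cod C p \<longrightarrow>
        (\<exists>p' f'. is_pullback C p f p' f' \<and> adm_epi C p'))"

text \<open>Acyclic: d n factors as P (n+1) \<rightarrow> J n (admissible epi e n) followed by J n \<rightarrow> P n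
  (admissible mono m n), with J (n+1) \<rightarrow> P (n+1) \<rightarrow> J n a conflation, and in degree 0
  (where J (-1) = 0) a conflation J 0 \<rightarrow> P 0 \<rightarrow> 0.\<close>
definition acyclic :: "('o,'m) excat \<Rightarrow> (nat \<Rightarrow> 'o) \<Rightarrow> (nat \<Rightarrow> 'm) \<Rightarrow> bool" where
  "acyclic C P d \<longleftrightarrow> (\<forall>n. d n \<in> homs C (P (Suc n)) (P n)) \<and>
     (\<exists>J e m. (\<forall>n. e n \<in> homs C (P (Suc n)) (J n) \<and> m n \<in> homs C (J n) (P n) \<and>
                    d n = comp C (m n) (e n) \<and> (m (Suc n), e n) \<in> confl C) \<and>
              (\<exists>z q. is_zero_obj C z \<and> q \<in> homs C (P 0) z \<and> (m 0, q) \<in> confl C))"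

type_synonym ('o, 'm) bcx = "(nat \<Rightarrow> 'o) \<times> (nat \<Rightarrow> 'm) \<times> (nat \<Rightarrow> 'm)"

definition binacyc :: "('o,'m) excat \<Rightarrow> nat \<Rightarrow> ('o,'m) bcx set" where
  "binacyc C k = {(P, d, d'). (\<forall>n>k. is_zero_obj C (P n)) \<and> acyclic C P d \<and> acyclic C P d'}"

definition bmor :: "('o,'m) excat \<Rightarrow> ('o,'m) bcx \<Rightarrow> ('o,'m) bcx \<Rightarrow> (nat \<Rightarrow> 'm) \<Rightarrow> bool" where
  "bmor C X Y f \<longleftrightarrow> (case X of (P, d, d') \<Rightarrow> case Y of (Q, e, e') \<Rightarrow>
     (\<forall>n. f n \<in> homs C (P n) (Q n) \<and>
          comp C (f n) (d n) = comp C (e n) (f (Suc n)) \<and>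
          comp C (f n) (d' n) = comp C (e' n) (f (Suc n))))"

definition bconfl :: "('o,'m) excat \<Rightarrow> ('o,'m) bcx \<Rightarrow> ('o,'m) bcx \<Rightarrow> ('o,'m) bcx \<Rightarrow> bool" where
  "bconfl C X Y Z \<longleftrightarrow> (\<exists>f g. bmor C X Y f \<and> bmor C Y Z g \<and> (\<forall>n. (f n, g n) \<in> confl C))"

definition zobj :: "('o,'m) excat \<Rightarrow> 'o" where
  "zobj C = (SOME z. is_zero_obj C z)"

definition pair2 :: "('o,'m) excat \<Rightarrow> 'o \<Rightarrow> 'm \<Rightarrow> 'm \<Rightarrow> ('o,'m) bcx" where
  "pair2 C X a b =
     (let P = (\<lambda>n. if n \<le> 1 then X else zobj C) in
      (P, (\<lambda>n. if n = 0 then a else zmor C (P (Suc n)) (P n)),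
          (\<lambda>n. if n = 0 then b else zmor C (P (Suc n)) (P n))))"

abbreviation FA :: "('o,'m) excat \<Rightarrow> nat \<Rightarrow> (('o,'m) bcx \<Rightarrow>\<^sub>0 int) monoid" where
  "FA C k \<equiv> free_Abelian_group (binacyc C k)"

definition B_rels :: "('o,'m) excat \<Rightarrow> nat \<Rightarrow> (('o,'m) bcx \<Rightarrow>\<^sub>0 int) set" where
  "B_rels C k = {frag_of Y - frag_of X - frag_of Z | X Y Z.
       X \<in> binacyc C k \<and> Y \<in> binacyc C k \<and> Z \<in> binacyc C k \<and> bconfl C X Y Z}"

definition diag_rels :: "('o,'m) excat \<Rightarrow> nat \<Rightarrow> (('o,'m) bcx \<Rightarrow>\<^sub>0 int) set" where
  "diag_rels C k = {frag_of (P, d, d) | P d. (P, d, d) \<in> binacyc C k}"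

definition is_involution :: "('o,'m) excat \<Rightarrow> 'o \<Rightarrow> 'm \<Rightarrow> bool" where
  "is_involution C X s \<longleftrightarrow> s \<in> homs C X X \<and> comp C s s = idm C X"

text \<open>Ladder relations with P_i = Q_i and all sigma_i, tau_i involutions:
  Q - P = sum_{i=0}^k (-1)^i <sigma_i, tau_i>.  sigma, tau are chain isomorphisms
  (involutions are isomorphisms; chain condition for top resp. bottom differentials).\<close>
definition ladder_rels :: "('o,'m) excat \<Rightarrow> nat \<Rightarrow> (('o,'m) bcx \<Rightarrow>\<^sub>0 int) set" where
  "ladder_rels C k = {frag_of (P, e, e') - frag_of (P, d, d')
        - (\<Sum>i\<in>{0..k}. frag_cmul ((-1) ^ i) (frag_of (pair2 C (P i) (\<sigma> i) (\<tau> i))))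
     | P d d' e e' \<sigma> \<tau>.
       (P, d, d') \<in> binacyc C k \<and> (P, e, e') \<in> binacyc C k \<and>
       (\<forall>n. is_involution C (P n) (\<sigma> n) \<and> is_involution C (P n) (\<tau> n) \<and>
            comp C (\<sigma> n) (d n) = comp C (e n) (\<sigma> (Suc n)) \<and>
            comp C (\<tau> n) (d' n) = comp C (e' n) (\<tau> (Suc n)))}"

definition K_sub :: "('o,'m) excat \<Rightarrow> nat \<Rightarrow> (('o,'m) bcx \<Rightarrow>\<^sub>0 int) set" where
  "K_sub C k = generate (FA C k) (B_rels C k \<union> diag_rels C k)"

definition L_sub :: "('o,'m) excat \<Rightarrow> nat \<Rightarrow> (('o,'m) bcx \<Rightarrow>\<^sub>0 int) set" where
  "L_sub C k = generate (FA C k) (B_rels C k \<union> diag_rels C k \<union> ladder_rels C k)"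

definition K1 :: "('o,'m) excat \<Rightarrow> nat \<Rightarrow> _" where
  "K1 C k = FA C k Mod K_sub C k"

definition L1 :: "('o,'m) excat \<Rightarrow> nat \<Rightarrow> _" where
  "L1 C k = FA C k Mod L_sub C k"

definition Kcls :: "('o,'m) excat \<Rightarrow> nat \<Rightarrow> ('o,'m) bcx \<Rightarrow> _" where
  "Kcls C k X = K_sub C k #>\<^bsub>FA C k\<^esub> frag_of X"

definition Lcls :: "('o,'m) excat \<Rightarrow> nat \<Rightarrow> ('o,'m) bcx \<Rightarrow> _" where
  "Lcls C k X = L_sub C k #>\<^bsub>FA C k\<^esub> frag_of X"

end

theory Submission
  imports Defs
begin

text \<open>Everything except one point is the universal property of quotients of free Abelian groups:
  the ladder relations of level \<open>k\<close> must already hold in \<open>K\<^sub>1\<^sup>k\<^sup>+\<^sup>1\<close>.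
  Given involutions \<open>\<sigma>, \<tau>\<close> from \<open>(P, d, d')\<close> to \<open>(P, e, e')\<close>, take the mapping cones of \<open>\<sigma>\<close> and
  \<open>\<tau>\<close>, which live on \<open>[0, k + 1]\<close>. Filtering the binary cone by degree gives conflations whose
  quotients are the elementary complexes \<open>\<langle>\<sigma>\<^sub>j, \<tau>\<^sub>j\<rangle>\<close> placed in degrees \<open>j, j + 1\<close>, and
  \<open>P \<rightarrowtail> cone \<twoheadrightarrow> P[1]\<close> is another conflation. Hence
  \<open>[P, e, e'] + [P[1]] = \<Sum>\<^sub>j [\<langle>\<sigma>\<^sub>j, \<tau>\<^sub>j\<rangle>[j]]\<close>; for the identity ladder on \<open>(P, d, d')\<close> all layers
  are diagonal, so \<open>[P, d, d'] + [P[1]] = 0\<close>. The same identity \<open>[X[1]] = -[X]\<close> applied to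
  elementary complexes gives \<open>[\<langle>\<sigma>\<^sub>j, \<tau>\<^sub>j\<rangle>[j]] = (-1)\<^sup>j [\<langle>\<sigma>\<^sub>j, \<tau>\<^sub>j\<rangle>]\<close>, which is the ladder
  relation.\<close>

section \<open>Quotients of free Abelian groups\<close>

lemma free_Abelian_subgroup_closed:
  assumes "subgroup H (free_Abelian_group S)"
  shows "0 \<in> H" "a \<in> H \<Longrightarrow> b \<in> H \<Longrightarrow> a + b \<in> H" "a \<in> H \<Longrightarrow> - a \<in> H"
    "a \<in> H \<Longrightarrow> b \<in> H \<Longrightarrow> a - b \<in> H"
proof -
  interpret subgroup H "free_Abelian_group S" by fact
  show "0 \<in> H" using one_closed by simp
  show add: "a + b \<in> H" if "a \<in> H" "b \<in> H" for a b using m_closed that by simp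
  show uminus: "- a \<in> H" if "a \<in> H" for a
  proof -
    have "a \<in> carrier (free_Abelian_group S)" using subset that by blast
    then show ?thesis using m_inv_closed[OF that] by simp
  qed
  show "a - b \<in> H" if "a \<in> H" "b \<in> H" for a b
    using add[OF that(1) uminus[OF that(2)]] by simp
qed

lemma r_coset_free_Abelian_group_eq_iff:
  assumes "subgroup H (free_Abelian_group S)"
  shows "H #>\<^bsub>free_Abelian_group S\<^esub> x = H #>\<^bsub>free_Abelian_group S\<^esub> y \<longleftrightarrow> x - y \<in> H"
proof -
  note H = free_Abelian_subgroup_closed[OF assms]
  have coset: "H #>\<^bsub>free_Abelian_group S\<^esub> z = (\<lambda>h. h + z) ` H" for z
    by (auto simp: r_coset_def)
  show ?thesis
  proof
    assume "H #>\<^bsub>free_Abelian_group S\<^esub> x = H #>\<^bsub>free_Abelian_group S\<^esub> y"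
    then have "0 + x \<in> (\<lambda>h. h + y) ` H" using H(1) unfolding coset by blast
    then show "x - y \<in> H" by (auto simp: algebra_simps)
  next
    assume xy: "x - y \<in> H"
    have "h + x = (h + (x - y)) + y" "h + y = (h - (x - y)) + x" for h by simp_all
    then show "H #>\<^bsub>free_Abelian_group S\<^esub> x = H #>\<^bsub>free_Abelian_group S\<^esub> y"
      unfolding coset using H(2,4)[OF _ xy] by (smt (verit) equalityI image_iff subsetI)
  qed
qed

lemma generate_free_Abelian_subgroup:
  "A \<subseteq> carrier (free_Abelian_group S) \<Longrightarrow> subgroup (generate (free_Abelian_group S) A) (free_Abelian_group S)"
  by (simp add: group.generate_is_subgroup)

lemma free_Abelian_group_diff_closed:
  "x \<in> carrier (free_Abelian_group S) \<Longrightarrow> y \<in> carrier (free_Abelian_group S) \<Longrightarrow>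
   x - y \<in> carrier (free_Abelian_group S)"
  using keys_diff[of x y] by auto

lemma generate_free_Abelian_subset:
  assumes "A \<subseteq> carrier (free_Abelian_group S)" "subgroup H (free_Abelian_group T)" "A \<subseteq> H"
  shows "generate (free_Abelian_group S) A \<subseteq> H"
proof
  note H = free_Abelian_subgroup_closed[OF assms(2)]
  fix x assume "x \<in> generate (free_Abelian_group S) A"
  then show "x \<in> H"
  proof induction
    case (inv h)
    then have "h \<in> carrier (free_Abelian_group S)" using assms(1) by blast
    then show ?case using inv H(3) assms(3) by auto
  qed (use H assms in auto)
qed

lemma free_Abelian_quotient_map:
  assumes "S \<subseteq> T" and H: "subgroup H (free_Abelian_group S)" and H': "subgroup H' (free_Abelian_group T)"
    and "H \<subseteq> H'"
  obtains \<phi> where "\<phi> \<in> hom (free_Abelian_group S Mod H) (free_Abelian_group T Mod H')"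
    "\<And>x. x \<in> carrier (free_Abelian_group S) \<Longrightarrow>
       \<phi> (H #>\<^bsub>free_Abelian_group S\<^esub> x) = H' #>\<^bsub>free_Abelian_group T\<^esub> x"
proof (rule FactGroup_universal)
  have "normal H' (free_Abelian_group T)" "normal H (free_Abelian_group S)"
    using H H' abelian_free_Abelian_group comm_group.subgroup_imp_normal by blast+
  then show "H \<lhd> free_Abelian_group S"
    and "r_coset (free_Abelian_group T) H' \<in> hom (free_Abelian_group S) (free_Abelian_group T Mod H')"
    using normal.r_coset_hom_Mod assms(1) by (fastforce simp: hom_def Pi_iff)+
  show "H' #>\<^bsub>free_Abelian_group T\<^esub> x = H' #>\<^bsub>free_Abelian_group T\<^esub> y"
    if "H #>\<^bsub>free_Abelian_group S\<^esub> x = H #>\<^bsub>free_Abelian_group S\<^esub> y" for x y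
    using that assms(4) r_coset_free_Abelian_group_eq_iff[OF H] r_coset_free_Abelian_group_eq_iff[OF H']
    by blast
qed (use that in blast)

lemma free_Abelian_quotient_hom_eqI:
  assumes H: "subgroup H (free_Abelian_group S)" and "group G"
    and f: "f \<in> hom (free_Abelian_group S Mod H) G" and g: "g \<in> hom (free_Abelian_group S Mod H) G"
    and agree: "\<And>s. s \<in> S \<Longrightarrow>
       f (H #>\<^bsub>free_Abelian_group S\<^esub> frag_of s) = g (H #>\<^bsub>free_Abelian_group S\<^esub> frag_of s)"
    and x: "x \<in> carrier (free_Abelian_group S Mod H)"
  shows "f x = g x"
proof -
  let ?F = "free_Abelian_group S"
  have quot: "r_coset ?F H \<in> hom ?F (?F Mod H)"
    using H abelian_free_Abelian_group comm_group.subgroup_imp_normal normal.r_coset_hom_Mod by blast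
  interpret f: group_hom ?F G "f \<circ> r_coset ?F H"
    using f quot \<open>group G\<close> hom_compose by (simp add: group_hom_def group_hom_axioms_def)
  interpret g: group_hom ?F G "g \<circ> r_coset ?F H"
    using g quot \<open>group G\<close> hom_compose by (simp add: group_hom_def group_hom_axioms_def)
  obtain a where a: "Poly_Mapping.keys a \<subseteq> S" "x = H #>\<^bsub>?F\<^esub> a"
    using x by (auto simp: carrier_FactGroup)
  have "(f \<circ> r_coset ?F H) a = (g \<circ> r_coset ?F H) a"
  proof (induction rule: free_Abelian_group_induct[OF a(1)])
    case (2 x y)
    then have xy: "x \<in> carrier ?F" "y \<in> carrier ?F" "inv\<^bsub>?F\<^esub> y \<in> carrier ?F" by auto
    have "x - y = x \<otimes>\<^bsub>?F\<^esub> inv\<^bsub>?F\<^esub> y" using 2 by simp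
    then show ?case
      using 2 f.hom_mult[OF xy(1,3)] g.hom_mult[OF xy(1,3)] f.hom_inv[OF xy(2)] g.hom_inv[OF xy(2)]
      by simp
  qed (use f.hom_one g.hom_one agree in auto)
  then show ?thesis using a by simp
qed

lemma free_Abelian_quotient_factorization:
  assumes "S \<subseteq> T" and H: "subgroup H (free_Abelian_group S)"
    and K: "subgroup K (free_Abelian_group T)" and L: "subgroup L (free_Abelian_group T)"
    and "H \<subseteq> K" "K \<subseteq> L"
  obtains \<phi> \<pi> where
    "\<phi> \<in> hom (free_Abelian_group S Mod H) (free_Abelian_group T Mod K)"
    "\<And>s. s \<in> S \<Longrightarrow>
       \<phi> (H #>\<^bsub>free_Abelian_group S\<^esub> frag_of s) = K #>\<^bsub>free_Abelian_group T\<^esub> frag_of s"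
    "\<pi> \<in> hom (free_Abelian_group T Mod K) (free_Abelian_group T Mod L)"
    "\<pi> ` carrier (free_Abelian_group T Mod K) = carrier (free_Abelian_group T Mod L)"
    "\<And>t. t \<in> T \<Longrightarrow>
       \<pi> (K #>\<^bsub>free_Abelian_group T\<^esub> frag_of t) = L #>\<^bsub>free_Abelian_group T\<^esub> frag_of t"
    "\<And>i x. i \<in> hom (free_Abelian_group S Mod H) (free_Abelian_group T Mod L) \<Longrightarrow>
       (\<forall>s \<in> S. i (H #>\<^bsub>free_Abelian_group S\<^esub> frag_of s) = L #>\<^bsub>free_Abelian_group T\<^esub> frag_of s) \<Longrightarrow>
       x \<in> carrier (free_Abelian_group S Mod H) \<Longrightarrow> i x = \<pi> (\<phi> x)"
proof -
  let ?F = "free_Abelian_group S" and ?G = "free_Abelian_group T"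
  obtain \<phi> where \<phi>: "\<phi> \<in> hom (?F Mod H) (?G Mod K)"
    "\<And>x. x \<in> carrier ?F \<Longrightarrow> \<phi> (H #>\<^bsub>?F\<^esub> x) = K #>\<^bsub>?G\<^esub> x"
    using free_Abelian_quotient_map[OF assms(1) H K assms(5)] by blast
  obtain \<pi> where \<pi>: "\<pi> \<in> hom (?G Mod K) (?G Mod L)"
    "\<And>x. x \<in> carrier ?G \<Longrightarrow> \<pi> (K #>\<^bsub>?G\<^esub> x) = L #>\<^bsub>?G\<^esub> x"
    using free_Abelian_quotient_map[OF order.refl K L assms(6)] by blast
  have onto: "\<pi> ` carrier (?G Mod K) = carrier (?G Mod L)"
    unfolding carrier_FactGroup image_image using \<pi>(2) by (rule image_cong[OF refl])
  have factor: "i x = \<pi> (\<phi> x)"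
    if i: "i \<in> hom (?F Mod H) (?G Mod L)"
      and gen: "\<forall>s \<in> S. i (H #>\<^bsub>?F\<^esub> frag_of s) = L #>\<^bsub>?G\<^esub> frag_of s"
      and x: "x \<in> carrier (?F Mod H)" for i x
  proof -
    have "group (?G Mod L)"
      using L abelian_free_Abelian_group comm_group.subgroup_imp_normal normal.factorgroup_is_group
      by blast
    moreover have "i (H #>\<^bsub>?F\<^esub> frag_of s) = (\<pi> \<circ> \<phi>) (H #>\<^bsub>?F\<^esub> frag_of s)" if "s \<in> S" for s
      using gen \<phi>(2) \<pi>(2) that assms(1) by auto
    ultimately have "i x = (\<pi> \<circ> \<phi>) x"
      by (rule free_Abelian_quotient_hom_eqI[OF H _ i hom_compose[OF \<phi>(1) \<pi>(1)] _ x])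
    then show ?thesis by simp
  qed
  have \<phi>_gen: "\<phi> (H #>\<^bsub>?F\<^esub> frag_of s) = K #>\<^bsub>?G\<^esub> frag_of s" if "s \<in> S" for s
    using \<phi>(2) that by simp
  have \<pi>_gen: "\<pi> (K #>\<^bsub>?G\<^esub> frag_of t) = L #>\<^bsub>?G\<^esub> frag_of t" if "t \<in> T" for t
    using \<pi>(2) that by simp
  show thesis using that[of \<phi> \<pi>] \<phi>(1) \<phi>_gen \<pi>(1) onto \<pi>_gen factor by blast
qed

section \<open>The relation subgroups\<close>

lemma binacyc_mono: "k \<le> k' \<Longrightarrow> binacyc C k \<subseteq> binacyc C k'"
  unfolding binacyc_def by (auto intro: order.strict_trans1)

lemma B_rels_carrier: "B_rels C k \<subseteq> carrier (FA C k)"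
proof
  fix x assume "x \<in> B_rels C k"
  then obtain X Y Z where x: "x = frag_of Y - frag_of X - frag_of Z"
    and "X \<in> binacyc C k" "Y \<in> binacyc C k" "Z \<in> binacyc C k"
    unfolding B_rels_def by blast
  then show "x \<in> carrier (FA C k)"
    unfolding x by (intro free_Abelian_group_diff_closed) simp_all
qed

lemma diag_rels_carrier: "diag_rels C k \<subseteq> carrier (FA C k)"
  unfolding diag_rels_def by auto

lemma B_rels_mono: "B_rels C k \<subseteq> B_rels C (Suc k)"
  using binacyc_mono[of k "Suc k" C] unfolding B_rels_def by fastforce

lemma diag_rels_mono: "diag_rels C k \<subseteq> diag_rels C (Suc k)"
  using binacyc_mono[of k "Suc k" C] unfolding diag_rels_def by fastforce

lemma K_sub_subgroup: "subgroup (K_sub C k) (FA C k)"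
  unfolding K_sub_def
  by (rule generate_free_Abelian_subgroup) (use B_rels_carrier diag_rels_carrier in blast)

lemma K_sub_closed:
  "0 \<in> K_sub C k" "a \<in> K_sub C k \<Longrightarrow> b \<in> K_sub C k \<Longrightarrow> a + b \<in> K_sub C k"
  "a \<in> K_sub C k \<Longrightarrow> - a \<in> K_sub C k" "a \<in> K_sub C k \<Longrightarrow> b \<in> K_sub C k \<Longrightarrow> a - b \<in> K_sub C k"
  using free_Abelian_subgroup_closed[OF K_sub_subgroup] by blast+

lemma K_sub_sum: "finite I \<Longrightarrow> (\<And>i. i \<in> I \<Longrightarrow> x i \<in> K_sub C k) \<Longrightarrow> sum x I \<in> K_sub C k"
  by (induction I rule: finite_induct) (auto intro: K_sub_closed)

lemma K_sub_conflation:
  "X \<in> binacyc C k \<Longrightarrow> Y \<in> binacyc C k \<Longrightarrow> Z \<in> binacyc C k \<Longrightarrow> bconfl C X Y Z \<Longrightarrow>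
   frag_of Y - frag_of X - frag_of Z \<in> K_sub C k"
  unfolding K_sub_def B_rels_def by (rule generate.incl) blast

lemma K_sub_diagonal: "(P, d, d) \<in> binacyc C k \<Longrightarrow> frag_of (P, d, d) \<in> K_sub C k"
  unfolding K_sub_def diag_rels_def by (rule generate.incl) blast

section \<open>Additive and exact categories\<close>

locale exact_cat =
  fixes C :: "('o,'m) excat"
  assumes exact: "exact_category C"
begin

abbreviation cat_comp (infixr "\<cdot>" 70) where "g \<cdot> f \<equiv> comp C g f"
abbreviation hom_add (infixl "\<boxplus>" 65) where "f \<boxplus> g \<equiv> madd C f g"
abbreviation Hom where "Hom X Y \<equiv> homs C X Y"
abbreviation Z0 where "Z0 \<equiv> zobj C"
abbreviation is_zero where "is_zero X \<equiv> is_zero_obj C X"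

lemma additive: "is_additive C"
  using exact unfolding exact_category_def by (elim conjE) blast

lemma preadditive: "is_preadditive C"
  using additive unfolding is_additive_def by blast

lemma category: "is_category C"
  using preadditive unfolding is_preadditive_def by (elim conjE) meson

lemma homs_iff: "f \<in> Hom X Y \<longleftrightarrow> f \<in> Mor C \<and> dom C f = X \<and> cod C f = Y"
  unfolding homs_def by auto

lemma homI[intro]: "f \<in> Mor C \<Longrightarrow> dom C f = X \<Longrightarrow> cod C f = Y \<Longrightarrow> f \<in> Hom X Y"
  unfolding homs_def by auto

lemma dom_ob[simp]: "f \<in> Mor C \<Longrightarrow> dom C f \<in> Ob C"
  and cod_ob[simp]: "f \<in> Mor C \<Longrightarrow> cod C f \<in> Ob C"
  using category unfolding is_category_def by blast+

lemma homD: "f \<in> Hom X Y \<Longrightarrow> f \<in> Mor C" "f \<in> Hom X Y \<Longrightarrow> dom C f = X" "f \<in> Hom X Y \<Longrightarrow> cod C f = Y"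
  "f \<in> Hom X Y \<Longrightarrow> X \<in> Ob C" "f \<in> Hom X Y \<Longrightarrow> Y \<in> Ob C"
  unfolding homs_def by auto

lemma id_hom: "X \<in> Ob C \<Longrightarrow> idm C X \<in> Hom X X"
  using category unfolding is_category_def by blast

lemma id_mor[simp]: "X \<in> Ob C \<Longrightarrow> idm C X \<in> Mor C"
  and id_dom[simp]: "X \<in> Ob C \<Longrightarrow> dom C (idm C X) = X"
  and id_cod[simp]: "X \<in> Ob C \<Longrightarrow> cod C (idm C X) = X"
  using id_hom homD by blast+

lemma comp_hom: "f \<in> Hom X Y \<Longrightarrow> g \<in> Hom Y Z \<Longrightarrow> g \<cdot> f \<in> Hom X Z"
  using category unfolding is_category_def by blast

lemma comp_mor[simp]: "f \<in> Mor C \<Longrightarrow> g \<in> Mor C \<Longrightarrow> cod C f = dom C g \<Longrightarrow> g \<cdot> f \<in> Mor C"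
  and comp_dom[simp]: "f \<in> Mor C \<Longrightarrow> g \<in> Mor C \<Longrightarrow> cod C f = dom C g \<Longrightarrow> dom C (g \<cdot> f) = dom C f"
  and comp_cod[simp]: "f \<in> Mor C \<Longrightarrow> g \<in> Mor C \<Longrightarrow> cod C f = dom C g \<Longrightarrow> cod C (g \<cdot> f) = cod C g"
  using comp_hom[of f "dom C f" "cod C f" g "cod C g"] homs_iff by auto

lemma id_left[simp]: "f \<in> Mor C \<Longrightarrow> X = cod C f \<Longrightarrow> idm C X \<cdot> f = f"
  and id_right[simp]: "f \<in> Mor C \<Longrightarrow> X = dom C f \<Longrightarrow> f \<cdot> idm C X = f"
proof -
  assume "f \<in> Mor C"
  then have "f \<in> Hom (dom C f) (cod C f)" by auto
  then show "X = cod C f \<Longrightarrow> idm C X \<cdot> f = f" "X = dom C f \<Longrightarrow> f \<cdot> idm C X = f"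
    using category unfolding is_category_def by blast+
qed

lemma assoc[simp]: "f \<in> Mor C \<Longrightarrow> g \<in> Mor C \<Longrightarrow> h \<in> Mor C \<Longrightarrow> cod C f = dom C g \<Longrightarrow> cod C g = dom C h
   \<Longrightarrow> (h \<cdot> g) \<cdot> f = h \<cdot> (g \<cdot> f)"
proof -
  assume "f \<in> Mor C" "g \<in> Mor C" "h \<in> Mor C" "cod C f = dom C g" "cod C g = dom C h"
  then have "f \<in> Hom (dom C f) (cod C f)" "g \<in> Hom (cod C f) (cod C g)" "h \<in> Hom (cod C g) (cod C h)"
    by auto
  then show ?thesis using category unfolding is_category_def by (elim conjE) metis
qed

lemma zmor_hom: "X \<in> Ob C \<Longrightarrow> Y \<in> Ob C \<Longrightarrow> zmor C X Y \<in> Hom X Y"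
  using preadditive unfolding is_preadditive_def by (elim conjE) meson

lemma zmor_mor[simp]: "X \<in> Ob C \<Longrightarrow> Y \<in> Ob C \<Longrightarrow> zmor C X Y \<in> Mor C"
  and zmor_dom[simp]: "X \<in> Ob C \<Longrightarrow> Y \<in> Ob C \<Longrightarrow> dom C (zmor C X Y) = X"
  and zmor_cod[simp]: "X \<in> Ob C \<Longrightarrow> Y \<in> Ob C \<Longrightarrow> cod C (zmor C X Y) = Y"
  using zmor_hom homD by blast+

lemma add_hom: "f \<in> Hom X Y \<Longrightarrow> g \<in> Hom X Y \<Longrightarrow> f \<boxplus> g \<in> Hom X Y"
  using preadditive unfolding is_preadditive_def by (elim conjE) meson

lemma add_mor[simp]: "f \<in> Mor C \<Longrightarrow> g \<in> Mor C \<Longrightarrow> dom C f = dom C g \<Longrightarrow> cod C f = cod C g \<Longrightarrow> f \<boxplus> g \<in> Mor C"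
  and add_dom[simp]: "f \<in> Mor C \<Longrightarrow> g \<in> Mor C \<Longrightarrow> dom C f = dom C g \<Longrightarrow> cod C f = cod C g \<Longrightarrow> dom C (f \<boxplus> g) = dom C f"
  and add_cod[simp]: "f \<in> Mor C \<Longrightarrow> g \<in> Mor C \<Longrightarrow> dom C f = dom C g \<Longrightarrow> cod C f = cod C g \<Longrightarrow> cod C (f \<boxplus> g) = cod C f"
  using add_hom[of f "dom C f" "cod C f" g] homs_iff by auto

lemma add_assoc[simp]: "f \<in> Mor C \<Longrightarrow> g \<in> Mor C \<Longrightarrow> h \<in> Mor C \<Longrightarrow> dom C f = dom C g \<Longrightarrow> cod C f = cod C g
   \<Longrightarrow> dom C h = dom C g \<Longrightarrow> cod C h = cod C g \<Longrightarrow> (f \<boxplus> g) \<boxplus> h = f \<boxplus> (g \<boxplus> h)"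
proof -
  assume "f \<in> Mor C" "g \<in> Mor C" "h \<in> Mor C" "dom C f = dom C g" "cod C f = cod C g"
    "dom C h = dom C g" "cod C h = cod C g"
  then have "f \<in> Hom (dom C f) (cod C f)" "g \<in> Hom (dom C f) (cod C f)" "h \<in> Hom (dom C f) (cod C f)"
    by auto
  then show ?thesis
    using preadditive unfolding is_preadditive_def by (elim conjE) meson
qed

lemma add_comm: "f \<in> Mor C \<Longrightarrow> g \<in> Mor C \<Longrightarrow> dom C f = dom C g \<Longrightarrow> cod C f = cod C g \<Longrightarrow> f \<boxplus> g = g \<boxplus> f"
proof -
  assume "f \<in> Mor C" "g \<in> Mor C" "dom C f = dom C g" "cod C f = cod C g"
  then have "f \<in> Hom (dom C f) (cod C f)" "g \<in> Hom (dom C f) (cod C f)" by auto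
  then show ?thesis
    using preadditive unfolding is_preadditive_def by (elim conjE) meson
qed

lemma add_zero_right[simp]: "f \<in> Mor C \<Longrightarrow> X = dom C f \<Longrightarrow> Y = cod C f \<Longrightarrow> f \<boxplus> zmor C X Y = f"
proof -
  assume "f \<in> Mor C" "X = dom C f" "Y = cod C f"
  then have "f \<in> Hom X Y" by auto
  then show ?thesis
    using preadditive unfolding is_preadditive_def by (elim conjE) meson
qed

lemma add_zero_left[simp]: "f \<in> Mor C \<Longrightarrow> X = dom C f \<Longrightarrow> Y = cod C f \<Longrightarrow> zmor C X Y \<boxplus> f = f"
  using add_comm[of "zmor C X Y" f] by simp

lemma comp_add_left: "f \<in> Mor C \<Longrightarrow> g \<in> Mor C \<Longrightarrow> h \<in> Mor C \<Longrightarrow> dom C f = dom C g \<Longrightarrow> cod C f = cod C g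
   \<Longrightarrow> cod C f = dom C h \<Longrightarrow> h \<cdot> (f \<boxplus> g) = (h \<cdot> f) \<boxplus> (h \<cdot> g)"
proof -
  assume "f \<in> Mor C" "g \<in> Mor C" "h \<in> Mor C" "dom C f = dom C g" "cod C f = cod C g" "cod C f = dom C h"
  then have "f \<in> Hom (dom C f) (cod C f)" "g \<in> Hom (dom C f) (cod C f)" "h \<in> Hom (cod C f) (cod C h)"
    by auto
  then show ?thesis
    using preadditive unfolding is_preadditive_def by (elim conjE) meson
qed

lemma comp_add_right: "f \<in> Mor C \<Longrightarrow> g \<in> Mor C \<Longrightarrow> h \<in> Mor C \<Longrightarrow> dom C f = dom C g \<Longrightarrow> cod C f = cod C g
   \<Longrightarrow> cod C h = dom C f \<Longrightarrow> (f \<boxplus> g) \<cdot> h = (f \<cdot> h) \<boxplus> (g \<cdot> h)"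
proof -
  assume "f \<in> Mor C" "g \<in> Mor C" "h \<in> Mor C" "dom C f = dom C g" "cod C f = cod C g" "cod C h = dom C f"
  then have "f \<in> Hom (dom C f) (cod C f)" "g \<in> Hom (dom C f) (cod C f)" "h \<in> Hom (dom C h) (dom C f)"
    by auto
  then show ?thesis
    using preadditive unfolding is_preadditive_def by (elim conjE) meson
qed

lemma neg_ex: "f \<in> Mor C \<Longrightarrow> \<exists>g. g \<in> Hom (dom C f) (cod C f) \<and> f \<boxplus> g = zmor C (dom C f) (cod C f)"
proof -
  assume "f \<in> Mor C"
  then have "f \<in> Hom (dom C f) (cod C f)" by auto
  then show ?thesis
    using preadditive unfolding is_preadditive_def by (elim conjE) meson
qed

definition neg where "neg f = (SOME g. g \<in> Hom (dom C f) (cod C f) \<and> f \<boxplus> g = zmor C (dom C f) (cod C f))"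

lemma neg_hom: "f \<in> Mor C \<Longrightarrow> neg f \<in> Hom (dom C f) (cod C f)"
  and add_neg[simp]: "f \<in> Mor C \<Longrightarrow> f \<boxplus> neg f = zmor C (dom C f) (cod C f)"
  using someI_ex[OF neg_ex] unfolding neg_def by blast+

lemma neg_mor[simp]: "f \<in> Mor C \<Longrightarrow> neg f \<in> Mor C"
  and neg_dom[simp]: "f \<in> Mor C \<Longrightarrow> dom C (neg f) = dom C f"
  and neg_cod[simp]: "f \<in> Mor C \<Longrightarrow> cod C (neg f) = cod C f"
  using neg_hom homD by blast+

lemma neg_add[simp]: "f \<in> Mor C \<Longrightarrow> neg f \<boxplus> f = zmor C (dom C f) (cod C f)"
  using add_comm[of "neg f" f] by simp

lemma add_cancel: assumes "f \<in> Mor C" "g \<in> Mor C" "h \<in> Mor C" "dom C f = dom C h" "cod C f = cod C h"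
  "dom C g = dom C h" "cod C g = cod C h" "f \<boxplus> h = g \<boxplus> h" shows "f = g"
proof -
  have "(f \<boxplus> h) \<boxplus> neg h = f \<boxplus> (h \<boxplus> neg h)" using assms by (intro add_assoc) auto
  also have "\<dots> = f" using assms by simp
  finally have 1: "(f \<boxplus> h) \<boxplus> neg h = f" .
  have "(g \<boxplus> h) \<boxplus> neg h = g \<boxplus> (h \<boxplus> neg h)" using assms by (intro add_assoc) auto
  also have "\<dots> = g" using assms by simp
  finally have 2: "(g \<boxplus> h) \<boxplus> neg h = g" .
  show ?thesis using 1 2 assms(8) by metis
qed

lemma comp_zero_right[simp]: "f \<in> Mor C \<Longrightarrow> X \<in> Ob C \<Longrightarrow> Y = dom C f \<Longrightarrow> f \<cdot> zmor C X Y = zmor C X (cod C f)"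
proof -
  assume a: "f \<in> Mor C" "X \<in> Ob C" "Y = dom C f"
  have "f \<cdot> zmor C X Y \<boxplus> f \<cdot> zmor C X Y = f \<cdot> (zmor C X Y \<boxplus> zmor C X Y)"
    using a by (intro comp_add_left[symmetric]) auto
  also have "\<dots> = f \<cdot> zmor C X Y" using a by simp
  also have "\<dots> = zmor C X (cod C f) \<boxplus> f \<cdot> zmor C X Y" using a by simp
  finally have e: "f \<cdot> zmor C X Y \<boxplus> f \<cdot> zmor C X Y = zmor C X (cod C f) \<boxplus> f \<cdot> zmor C X Y" .
  show ?thesis by (rule add_cancel[OF _ _ _ _ _ _ _ e]) (use a in simp_all)
qed

lemma comp_zero_left[simp]: "f \<in> Mor C \<Longrightarrow> Y \<in> Ob C \<Longrightarrow> X = cod C f \<Longrightarrow> zmor C X Y \<cdot> f = zmor C (dom C f) Y"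
proof -
  assume a: "f \<in> Mor C" "Y \<in> Ob C" "X = cod C f"
  have "zmor C X Y \<cdot> f \<boxplus> zmor C X Y \<cdot> f = (zmor C X Y \<boxplus> zmor C X Y) \<cdot> f"
    using a by (intro comp_add_right[symmetric]) auto
  also have "\<dots> = zmor C X Y \<cdot> f" using a by simp
  also have "\<dots> = zmor C (dom C f) Y \<boxplus> zmor C X Y \<cdot> f" using a by simp
  finally have e: "zmor C X Y \<cdot> f \<boxplus> zmor C X Y \<cdot> f = zmor C (dom C f) Y \<boxplus> zmor C X Y \<cdot> f" .
  show ?thesis by (rule add_cancel[OF _ _ _ _ _ _ _ e]) (use a in simp_all)
qed

lemma neg_unique: "f \<in> Mor C \<Longrightarrow> g \<in> Mor C \<Longrightarrow> dom C g = dom C f \<Longrightarrow> cod C g = cod C f \<Longrightarrow>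
   f \<boxplus> g = zmor C (dom C f) (cod C f) \<Longrightarrow> g = neg f"
  by (rule add_cancel[of _ _ f]) (auto simp: add_comm[of g f])

lemma neg_neg[simp]: "f \<in> Mor C \<Longrightarrow> neg (neg f) = f"
  by (metis neg_unique neg_add neg_mor neg_dom neg_cod)

lemma neg_comp_left[simp]: "f \<in> Mor C \<Longrightarrow> g \<in> Mor C \<Longrightarrow> cod C f = dom C g \<Longrightarrow> neg g \<cdot> f = neg (g \<cdot> f)"
proof -
  assume a: "f \<in> Mor C" "g \<in> Mor C" "cod C f = dom C g"
  have "g \<cdot> f \<boxplus> neg g \<cdot> f = (g \<boxplus> neg g) \<cdot> f" using a by (intro comp_add_right[symmetric]) auto
  also have "\<dots> = zmor C (dom C (g \<cdot> f)) (cod C (g \<cdot> f))" using a by simp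
  finally show ?thesis using a by (intro neg_unique) auto
qed

lemma neg_comp_right[simp]: "f \<in> Mor C \<Longrightarrow> g \<in> Mor C \<Longrightarrow> cod C f = dom C g \<Longrightarrow> g \<cdot> neg f = neg (g \<cdot> f)"
proof -
  assume a: "f \<in> Mor C" "g \<in> Mor C" "cod C f = dom C g"
  have "g \<cdot> f \<boxplus> g \<cdot> neg f = g \<cdot> (f \<boxplus> neg f)" using a by (intro comp_add_left[symmetric]) auto
  also have "\<dots> = zmor C (dom C (g \<cdot> f)) (cod C (g \<cdot> f))" using a by simp
  finally show ?thesis using a by (intro neg_unique) auto
qed

lemma neg_zero[simp]: "X \<in> Ob C \<Longrightarrow> Y \<in> Ob C \<Longrightarrow> neg (zmor C X Y) = zmor C X Y"
  by (rule sym, rule neg_unique) auto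

lemma is_zero_Z0[simp]: "is_zero Z0"
proof -
  have "\<exists>Z. is_zero Z" using additive unfolding is_additive_def by blast
  then show ?thesis unfolding zobj_def by (rule someI_ex)
qed

lemma zero_ob: "is_zero Z \<Longrightarrow> Z \<in> Ob C" unfolding is_zero_obj_def by blast

lemma Z0_ob[simp]: "Z0 \<in> Ob C" using is_zero_Z0 zero_ob by blast

lemma hom_from_zero: "is_zero Z \<Longrightarrow> f \<in> Hom Z X \<Longrightarrow> f = zmor C Z X"
proof -
  assume z: "is_zero Z" and f: "f \<in> Hom Z X"
  have X: "X \<in> Ob C" using f homs_iff cod_ob by metis
  have "zmor C Z X \<in> Hom Z X" using zmor_hom zero_ob[OF z] X by blast
  then show ?thesis using z f X unfolding is_zero_obj_def by metis
qed

lemma hom_to_zero: "is_zero Z \<Longrightarrow> f \<in> Hom X Z \<Longrightarrow> f = zmor C X Z"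
proof -
  assume z: "is_zero Z" and f: "f \<in> Hom X Z"
  have X: "X \<in> Ob C" using f homs_iff dom_ob by metis
  have "zmor C X Z \<in> Hom X Z" using zmor_hom zero_ob[OF z] X by blast
  then show ?thesis using z f X unfolding is_zero_obj_def by metis
qed

lemma comp_through_zero: "is_zero Z \<Longrightarrow> g \<in> Hom X Z \<Longrightarrow> f \<in> Hom Z Y \<Longrightarrow> f \<cdot> g = zmor C X Y"
proof -
  assume z: "is_zero Z" and g: "g \<in> Hom X Z" and f: "f \<in> Hom Z Y"
  have "f = zmor C Z Y" using hom_from_zero z f by blast
  then show ?thesis using g f homD[OF f] homD[OF g] by simp
qed

lemma hom_from_zero_unique: "is_zero Z \<Longrightarrow> f \<in> Hom Z X \<Longrightarrow> g \<in> Hom Z X \<Longrightarrow> f = g"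
  using hom_from_zero by metis

lemma hom_to_zero_unique: "is_zero Z \<Longrightarrow> f \<in> Hom X Z \<Longrightarrow> g \<in> Hom X Z \<Longrightarrow> f = g"
  using hom_to_zero by metis

lemma isoI: "f \<in> Hom X Y \<Longrightarrow> g \<in> Hom Y X \<Longrightarrow> g \<cdot> f = idm C X \<Longrightarrow> f \<cdot> g = idm C Y \<Longrightarrow> is_iso C f"
  unfolding is_iso_def by (auto simp: homs_iff)

section \<open>Conflations\<close>

lemma confl_kernel_cokernel: "(i, p) \<in> confl C \<Longrightarrow> is_kernel_cokernel_pair C i p"
  using exact unfolding exact_category_def by (elim conjE) blast

lemma confl_iso_closed: "(i, p) \<in> confl C \<Longrightarrow> is_kernel_cokernel_pair C i' p' \<Longrightarrow>
        a \<in> Hom (dom C i) (dom C i') \<Longrightarrow> b \<in> Hom (cod C i) (cod C i') \<Longrightarrow>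
        c \<in> Hom (cod C p) (cod C p') \<Longrightarrow> is_iso C a \<Longrightarrow> is_iso C b \<Longrightarrow> is_iso C c \<Longrightarrow>
        i' \<cdot> a = b \<cdot> i \<Longrightarrow> p' \<cdot> b = c \<cdot> p \<Longrightarrow> (i', p') \<in> confl C"
  using exact unfolding exact_category_def by (elim conjE) blast

lemma confl_id_mono: "X \<in> Ob C \<Longrightarrow> \<exists>p. (idm C X, p) \<in> confl C"
  and confl_id_epi: "X \<in> Ob C \<Longrightarrow> \<exists>i. (i, idm C X) \<in> confl C"
  using exact unfolding exact_category_def adm_mono_def adm_epi_def by (elim conjE; blast)+

lemma pushout_adm_mono:
  "adm_mono C i \<Longrightarrow> f \<in> Mor C \<Longrightarrow> dom C f = dom C i \<Longrightarrow> \<exists>i' f'. is_pushout C i f i' f' \<and> adm_mono C i'"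
  using exact unfolding exact_category_def by (elim conjE) blast

lemma comp_eq_whisker: "g \<cdot> f = h \<cdot> k \<Longrightarrow> f \<in> Mor C \<Longrightarrow> g \<in> Mor C \<Longrightarrow> h \<in> Mor C \<Longrightarrow> k \<in> Mor C \<Longrightarrow> x \<in> Mor C
  \<Longrightarrow> cod C f = dom C g \<Longrightarrow> cod C k = dom C h \<Longrightarrow> cod C x = dom C f \<Longrightarrow> cod C x = dom C k
  \<Longrightarrow> g \<cdot> (f \<cdot> x) = h \<cdot> (k \<cdot> x)"
  by (metis assoc)

lemma square_inverse:
  assumes f: "f \<in> Hom X Y" and g: "g \<in> Hom X' Y'"
    and a: "a \<in> Hom X X'" "a' \<in> Hom X' X" "a \<cdot> a' = idm C X'"
    and b: "b \<in> Hom Y Y'" "b' \<in> Hom Y' Y" "b' \<cdot> b = idm C Y"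
    and sq: "g \<cdot> a = b \<cdot> f"
  shows "b' \<cdot> g = f \<cdot> a'"
proof -
  note T = f g a(1,2) b(1,2)
  note TT = T[THEN homD(1)] T[THEN homD(2)] T[THEN homD(3)]
  have "b' \<cdot> g = b' \<cdot> (g \<cdot> (a \<cdot> a'))" using a(3) TT by simp
  also have "\<dots> = b' \<cdot> (b \<cdot> (f \<cdot> a'))" using comp_eq_whisker[OF sq, of a'] TT by simp
  also have "\<dots> = f \<cdot> a'" using b(3) TT by (simp flip: assoc)
  finally show ?thesis .
qed

definition kernel_univ :: "'m \<Rightarrow> 'm \<Rightarrow> bool" where
  "kernel_univ i p \<longleftrightarrow> (\<forall>X\<in>Ob C. \<forall>f \<in> Hom X (dom C p). p \<cdot> f = zmor C X (cod C p) \<longrightarrow>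
        (\<exists>!g. g \<in> Hom X (dom C i) \<and> i \<cdot> g = f))"

definition cokernel_univ :: "'m \<Rightarrow> 'm \<Rightarrow> bool" where
  "cokernel_univ i p \<longleftrightarrow> (\<forall>X\<in>Ob C. \<forall>f \<in> Hom (cod C i) X. f \<cdot> i = zmor C (dom C i) X \<longrightarrow>
        (\<exists>!g. g \<in> Hom (cod C p) X \<and> g \<cdot> p = f))"

lemma is_kernel_cokernel_pair_iff:
  "is_kernel_cokernel_pair C i p \<longleftrightarrow> i \<in> Mor C \<and> p \<in> Mor C \<and> cod C i = dom C p \<and>
     p \<cdot> i = zmor C (dom C i) (cod C p) \<and> kernel_univ i p \<and> cokernel_univ i p"
  unfolding is_kernel_cokernel_pair_def kernel_univ_def cokernel_univ_def by blast

lemma kernel_univ_iso: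
  assumes ker: "kernel_univ i p"
    and hi: "i \<in> Hom A B" and hp: "p \<in> Hom B D" and hi': "i' \<in> Hom A' B'" and hp': "p' \<in> Hom B' D'"
    and ha: "a \<in> Hom A A'" "a' \<in> Hom A' A" "a \<cdot> a' = idm C A'"
    and hb: "b \<in> Hom B B'" "b' \<in> Hom B' B" "b \<cdot> b' = idm C B'" and hc': "c' \<in> Hom D' D"
    and sq1: "i' \<cdot> a = b \<cdot> i" and sq1': "b' \<cdot> i' = i \<cdot> a'" and sq2': "p \<cdot> b' = c' \<cdot> p'"
  shows "kernel_univ i' p'"
  unfolding kernel_univ_def
proof (intro ballI impI)
  note T = hi hp hi' hp' ha(1,2) hb(1,2) hc'
  note TT = T[THEN homD(1)] T[THEN homD(2)] T[THEN homD(3)] T[THEN homD(4)] T[THEN homD(5)]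
  fix X f assume X: "X \<in> Ob C" and f: "f \<in> Hom X (dom C p')" and pf: "p' \<cdot> f = zmor C X (cod C p')"
  have fT: "f \<in> Mor C" "dom C f = X" "cod C f = B'" using f TT by (auto simp: homs_iff)
  have "p \<cdot> (b' \<cdot> f) = c' \<cdot> (p' \<cdot> f)" using comp_eq_whisker[OF sq2', of f] fT TT by simp
  also have "\<dots> = zmor C X D" using pf fT TT X by simp
  finally have u: "\<exists>!g. g \<in> Hom X A \<and> i \<cdot> g = b' \<cdot> f"
    using ker X fT TT unfolding kernel_univ_def by (simp add: homs_iff)
  then obtain g0 where g0: "g0 \<in> Hom X A" "i \<cdot> g0 = b' \<cdot> f" by blast
  have g0T: "g0 \<in> Mor C" "dom C g0 = X" "cod C g0 = A" using g0 by (auto simp: homs_iff)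
  show "\<exists>!g. g \<in> Hom X (dom C i') \<and> i' \<cdot> g = f"
  proof (rule ex1I[of _ "a \<cdot> g0"])
    have "i' \<cdot> (a \<cdot> g0) = b \<cdot> (b' \<cdot> f)" using comp_eq_whisker[OF sq1, of g0] g0 g0T TT by simp
    also have "\<dots> = f" using hb(3) fT TT by (simp flip: assoc)
    finally show "a \<cdot> g0 \<in> Hom X (dom C i') \<and> i' \<cdot> (a \<cdot> g0) = f" using g0T TT by auto
  next
    fix g assume g: "g \<in> Hom X (dom C i') \<and> i' \<cdot> g = f"
    have gT: "g \<in> Mor C" "dom C g = X" "cod C g = A'" using g TT by (auto simp: homs_iff)
    have "i \<cdot> (a' \<cdot> g) = b' \<cdot> f" using comp_eq_whisker[OF sq1'[symmetric], of g] g gT TT by simp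
    moreover have "a' \<cdot> g \<in> Hom X A" using gT TT by auto
    ultimately have "a' \<cdot> g = g0" using u g0 by blast
    then show "g = a \<cdot> g0" using ha(3) gT TT by (metis assoc id_left)
  qed
qed

lemma cokernel_univ_iso:
  assumes coker: "cokernel_univ i p"
    and hi: "i \<in> Hom A B" and hp: "p \<in> Hom B D" and hi': "i' \<in> Hom A' B'" and hp': "p' \<in> Hom B' D'"
    and ha: "a \<in> Hom A A'"
    and hb: "b \<in> Hom B B'" "b' \<in> Hom B' B" "b \<cdot> b' = idm C B'"
    and hc: "c \<in> Hom D D'" "c' \<in> Hom D' D" "c \<cdot> c' = idm C D'"
    and sq1: "i' \<cdot> a = b \<cdot> i" and sq2: "p' \<cdot> b = c \<cdot> p" and sq2': "p \<cdot> b' = c' \<cdot> p'"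
  shows "cokernel_univ i' p'"
  unfolding cokernel_univ_def
proof (intro ballI impI)
  note T = hi hp hi' hp' ha hb(1,2) hc(1,2)
  note TT = T[THEN homD(1)] T[THEN homD(2)] T[THEN homD(3)] T[THEN homD(4)] T[THEN homD(5)]
  fix X f assume X: "X \<in> Ob C" and f: "f \<in> Hom (cod C i') X" and fi: "f \<cdot> i' = zmor C (dom C i') X"
  have fT: "f \<in> Mor C" "dom C f = B'" "cod C f = X" using f TT by (auto simp: homs_iff)
  have "(f \<cdot> b) \<cdot> i = (f \<cdot> i') \<cdot> a" using sq1 fT TT by simp
  also have "\<dots> = zmor C A X" using fi fT TT X by simp
  finally have u: "\<exists>!g. g \<in> Hom D X \<and> g \<cdot> p = f \<cdot> b"
    using coker X fT TT unfolding cokernel_univ_def by (simp add: homs_iff)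
  then obtain g0 where g0: "g0 \<in> Hom D X" "g0 \<cdot> p = f \<cdot> b" by blast
  have g0T: "g0 \<in> Mor C" "dom C g0 = D" "cod C g0 = X" using g0 by (auto simp: homs_iff)
  show "\<exists>!g. g \<in> Hom (cod C p') X \<and> g \<cdot> p' = f"
  proof (rule ex1I[of _ "g0 \<cdot> c'"])
    have "(g0 \<cdot> c') \<cdot> p' = g0 \<cdot> (p \<cdot> b')" using sq2' g0T TT by simp
    also have "\<dots> = (f \<cdot> b) \<cdot> b'" using g0 g0T TT by (simp flip: assoc)
    also have "\<dots> = f" using hb(3) fT TT by simp
    finally show "g0 \<cdot> c' \<in> Hom (cod C p') X \<and> (g0 \<cdot> c') \<cdot> p' = f" using g0T TT by auto
  next
    fix g assume g: "g \<in> Hom (cod C p') X \<and> g \<cdot> p' = f"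
    have gT: "g \<in> Mor C" "dom C g = D'" "cod C g = X" using g TT by (auto simp: homs_iff)
    have "(g \<cdot> c) \<cdot> p = (g \<cdot> p') \<cdot> b" using sq2 gT TT by simp
    then have "(g \<cdot> c) \<cdot> p = f \<cdot> b" using g by simp
    moreover have "g \<cdot> c \<in> Hom D X" using gT TT by auto
    ultimately have "g \<cdot> c = g0" using u g0 by blast
    then show "g = g0 \<cdot> c'" using hc(3) gT TT by (metis assoc id_right)
  qed
qed

lemma kernel_cokernel_pair_iso:
  assumes kcp: "is_kernel_cokernel_pair C i p"
    and hi: "i \<in> Hom A B" and hp: "p \<in> Hom B D" and hi': "i' \<in> Hom A' B'" and hp': "p' \<in> Hom B' D'"
    and ha: "a \<in> Hom A A'" and ha': "a' \<in> Hom A' A" and aa: "a' \<cdot> a = idm C A" "a \<cdot> a' = idm C A'"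
    and hb: "b \<in> Hom B B'" and hb': "b' \<in> Hom B' B" and bb: "b' \<cdot> b = idm C B" "b \<cdot> b' = idm C B'"
    and hc: "c \<in> Hom D D'" and hc': "c' \<in> Hom D' D" and cc: "c' \<cdot> c = idm C D" "c \<cdot> c' = idm C D'"
    and sq1: "i' \<cdot> a = b \<cdot> i" and sq2: "p' \<cdot> b = c \<cdot> p"
  shows "is_kernel_cokernel_pair C i' p'"
proof -
  note T = hi hp hi' hp' ha ha' hb hb' hc hc'
  note TT = T[THEN homD(1)] T[THEN homD(2)] T[THEN homD(3)] T[THEN homD(4)] T[THEN homD(5)]
  have sq1': "b' \<cdot> i' = i \<cdot> a'" by (rule square_inverse[OF hi hi' ha ha' aa(2) hb hb' bb(1) sq1])
  have sq2': "p \<cdot> b' = c' \<cdot> p'" by (rule square_inverse[OF hp hp' hb hb' bb(2) hc hc' cc(1) sq2, symmetric])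
  have "p' \<cdot> i' = p' \<cdot> (b \<cdot> (i \<cdot> a'))" using sq1' bb(2) TT by (metis assoc id_left)
  also have "\<dots> = c \<cdot> ((p \<cdot> i) \<cdot> a')" using comp_eq_whisker[OF sq2, of "i \<cdot> a'"] TT by simp
  also have "\<dots> = zmor C A' D'" using kcp TT unfolding is_kernel_cokernel_pair_def by simp
  finally have "p' \<cdot> i' = zmor C A' D'" .
  moreover have "kernel_univ i' p'"
    using kcp unfolding is_kernel_cokernel_pair_iff
    by (intro kernel_univ_iso[OF _ hi hp hi' hp' ha ha' aa(2) hb hb' bb(2) hc' sq1 sq1' sq2']) simp
  moreover have "cokernel_univ i' p'"
    using kcp unfolding is_kernel_cokernel_pair_iff
    by (intro cokernel_univ_iso[OF _ hi hp hi' hp' ha hb hb' bb(2) hc hc' cc(2) sq1 sq2 sq2']) simp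
  ultimately show ?thesis unfolding is_kernel_cokernel_pair_iff using TT by simp
qed

lemma confl_iso:
  assumes cf: "(i, p) \<in> confl C"
    and hi: "i \<in> Hom A B" and hp: "p \<in> Hom B D" and hi': "i' \<in> Hom A' B'" and hp': "p' \<in> Hom B' D'"
    and ha: "a \<in> Hom A A'" and ha': "a' \<in> Hom A' A" and aa: "a' \<cdot> a = idm C A" "a \<cdot> a' = idm C A'"
    and hb: "b \<in> Hom B B'" and hb': "b' \<in> Hom B' B" and bb: "b' \<cdot> b = idm C B" "b \<cdot> b' = idm C B'"
    and hc: "c \<in> Hom D D'" and hc': "c' \<in> Hom D' D" and cc: "c' \<cdot> c = idm C D" "c \<cdot> c' = idm C D'"
    and sq1: "i' \<cdot> a = b \<cdot> i" and sq2: "p' \<cdot> b = c \<cdot> p"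
  shows "(i', p') \<in> confl C"
proof (rule confl_iso_closed[OF cf])
  show "is_kernel_cokernel_pair C i' p'"
    by (rule kernel_cokernel_pair_iso[OF confl_kernel_cokernel[OF cf] hi hp hi' hp' ha ha' aa hb hb' bb hc hc' cc sq1 sq2])
  show "a \<in> Hom (dom C i) (dom C i')" "b \<in> Hom (cod C i) (cod C i')" "c \<in> Hom (cod C p) (cod C p')"
    using ha hb hc hi hi' hp hp' homD by metis+
  show "is_iso C a" by (rule isoI[OF ha ha' aa])
  show "is_iso C b" by (rule isoI[OF hb hb' bb])
  show "is_iso C c" by (rule isoI[OF hc hc' cc])
qed (fact sq1 sq2)+

lemma is_zero_if_id_zero:
  assumes W: "W \<in> Ob C" and idz: "idm C W = zmor C W W"
  shows "is_zero W"
  unfolding is_zero_obj_def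
proof (intro conjI ballI)
  show "W \<in> Ob C" by fact
  fix Y assume Y: "Y \<in> Ob C"
  show "\<exists>!f. f \<in> Hom W Y"
  proof (rule ex1I[of _ "zmor C W Y"])
    fix f assume f: "f \<in> Hom W Y"
    have "f = f \<cdot> idm C W" using f homD by simp
    also have "\<dots> = zmor C W Y" unfolding idz using f homD W by simp
    finally show "f = zmor C W Y" .
  qed (rule zmor_hom[OF W Y])
  show "\<exists>!f. f \<in> Hom Y W"
  proof (rule ex1I[of _ "zmor C Y W"])
    fix f assume f: "f \<in> Hom Y W"
    have "f = idm C W \<cdot> f" using f homD by simp
    also have "\<dots> = zmor C Y W" unfolding idz using f homD W by simp
    finally show "f = zmor C Y W" .
  qed (rule zmor_hom[OF Y W])
qed

lemma cokernel_of_id_is_zero: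
  assumes cf: "(idm C X, p) \<in> confl C" and X: "X \<in> Ob C"
  shows "is_zero (cod C p)" "p \<in> Hom X (cod C p)"
proof -
  have kcp: "is_kernel_cokernel_pair C (idm C X) p" by (rule confl_kernel_cokernel[OF cf])
  then have pM: "p \<in> Mor C" "dom C p = X" using X unfolding is_kernel_cokernel_pair_def by auto
  show "p \<in> Hom X (cod C p)" using pM by auto
  define W where "W = cod C p"
  have W: "W \<in> Ob C" using pM W_def by simp
  have pz: "p = zmor C X W"
  proof -
    have "p \<cdot> idm C X = zmor C X W" using kcp X pM unfolding is_kernel_cokernel_pair_def W_def by simp
    then show ?thesis using pM by simp
  qed
  have cok: "\<And>Y f. Y \<in> Ob C \<Longrightarrow> f \<in> Hom X Y \<Longrightarrow> f \<cdot> idm C X = zmor C X Y \<Longrightarrow> \<exists>!g. g \<in> Hom W Y \<and> g \<cdot> p = f"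
    using kcp X pM unfolding is_kernel_cokernel_pair_def W_def by simp
  have from_unique: "\<And>Y g g'. Y \<in> Ob C \<Longrightarrow> g \<in> Hom W Y \<Longrightarrow> g' \<in> Hom W Y \<Longrightarrow> g = g'"
  proof -
    fix Y g g' assume Y: "Y \<in> Ob C" and g: "g \<in> Hom W Y" and g': "g' \<in> Hom W Y"
    have u: "\<exists>!g. g \<in> Hom W Y \<and> g \<cdot> p = zmor C X Y" using cok[OF Y zmor_hom[OF X Y]] X Y by simp
    have "g \<cdot> p = zmor C X Y" "g' \<cdot> p = zmor C X Y" using pz g g' X W Y homD by simp_all
    then show "g = g'" using u g g' by blast
  qed
  have "idm C W = zmor C W W" using from_unique[OF W id_hom[OF W] zmor_hom[OF W W]] .
  then show "is_zero (cod C p)" using is_zero_if_id_zero[OF W] unfolding W_def by blast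
qed

lemma kernel_of_id_is_zero:
  assumes cf: "(i, idm C X) \<in> confl C" and X: "X \<in> Ob C"
  shows "is_zero (dom C i)" "i \<in> Hom (dom C i) X"
proof -
  have kcp: "is_kernel_cokernel_pair C i (idm C X)" by (rule confl_kernel_cokernel[OF cf])
  then have iM: "i \<in> Mor C" "cod C i = X" using X unfolding is_kernel_cokernel_pair_def by auto
  show "i \<in> Hom (dom C i) X" using iM by auto
  define W where "W = dom C i"
  have W: "W \<in> Ob C" using iM W_def by simp
  have iz: "i = zmor C W X"
  proof -
    have "idm C X \<cdot> i = zmor C W X" using kcp X iM unfolding is_kernel_cokernel_pair_def W_def by simp
    then show ?thesis using iM by simp
  qed
  have ker: "\<And>Y f. Y \<in> Ob C \<Longrightarrow> f \<in> Hom Y X \<Longrightarrow> idm C X \<cdot> f = zmor C Y X \<Longrightarrow> \<exists>!g. g \<in> Hom Y W \<and> i \<cdot> g = f"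
    using kcp X iM unfolding is_kernel_cokernel_pair_def W_def by simp
  have to_unique: "\<And>Y g g'. Y \<in> Ob C \<Longrightarrow> g \<in> Hom Y W \<Longrightarrow> g' \<in> Hom Y W \<Longrightarrow> g = g'"
  proof -
    fix Y g g' assume Y: "Y \<in> Ob C" and g: "g \<in> Hom Y W" and g': "g' \<in> Hom Y W"
    have u: "\<exists>!g. g \<in> Hom Y W \<and> i \<cdot> g = zmor C Y X" using ker[OF Y zmor_hom[OF Y X]] X Y by simp
    have "i \<cdot> g = zmor C Y X" "i \<cdot> g' = zmor C Y X" using iz g g' X W Y homD by simp_all
    then show "g = g'" using u g g' by blast
  qed
  have "idm C W = zmor C W W" using to_unique[OF W id_hom[OF W] zmor_hom[OF W W]] .
  then show "is_zero (dom C i)" using is_zero_if_id_zero[OF W] unfolding W_def by blast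
qed

lemma id_zero_obj: "is_zero Z \<Longrightarrow> idm C Z = zmor C Z Z"
  using hom_from_zero_unique id_hom zmor_hom zero_ob by metis

lemma confl_iso_to_zero:
  assumes f: "f \<in> Hom X Y" and g: "g \<in> Hom Y X" and fg: "g \<cdot> f = idm C X" "f \<cdot> g = idm C Y"
    and h: "h \<in> Hom Y Z" and z: "is_zero Z"
  shows "(f, h) \<in> confl C"
proof -
  have Y: "Y \<in> Ob C" using f homD by blast
  obtain p where cf: "(idm C Y, p) \<in> confl C" using confl_id_mono[OF Y] by blast
  define W where "W = cod C p"
  have W: "is_zero W" "p \<in> Hom Y W" using cokernel_of_id_is_zero[OF cf Y] W_def by auto
  have WO: "W \<in> Ob C" "Z \<in> Ob C" using W z zero_ob by auto
  show ?thesis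
  proof (rule confl_iso[OF cf id_hom[OF Y] W(2) f h g f fg(2) fg(1) id_hom[OF Y] id_hom[OF Y] _ _
        zmor_hom[OF WO] zmor_hom[OF WO(2) WO(1)]])
    show "idm C Y \<cdot> idm C Y = idm C Y" "idm C Y \<cdot> idm C Y = idm C Y" using Y by simp_all
    show "zmor C Z W \<cdot> zmor C W Z = idm C W" using id_zero_obj[OF W(1)] WO by simp
    show "zmor C W Z \<cdot> zmor C Z W = idm C Z" using id_zero_obj[OF z] WO by simp
    show "f \<cdot> g = idm C Y \<cdot> idm C Y" using fg Y by simp
    show "h \<cdot> idm C Y = zmor C W Z \<cdot> p"
      using hom_to_zero_unique[OF z] h W(2) comp_hom zmor_hom WO id_hom Y by metis
  qed
qed

lemma confl_zero_to_iso:
  assumes f: "f \<in> Hom Z X" and z: "is_zero Z" and h: "h \<in> Hom X Y" and h': "h' \<in> Hom Y X"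
    and hh: "h' \<cdot> h = idm C X" "h \<cdot> h' = idm C Y"
  shows "(f, h) \<in> confl C"
proof -
  have X: "X \<in> Ob C" using f homD by blast
  obtain i where cf: "(i, idm C X) \<in> confl C" using confl_id_epi[OF X] by blast
  define W where "W = dom C i"
  have W: "is_zero W" "i \<in> Hom W X" using kernel_of_id_is_zero[OF cf X] W_def by auto
  have WO: "W \<in> Ob C" "Z \<in> Ob C" using W z zero_ob by auto
  show ?thesis
  proof (rule confl_iso[OF cf W(2) id_hom[OF X] f h zmor_hom[OF WO] zmor_hom[OF WO(2) WO(1)] _ _
        id_hom[OF X] id_hom[OF X] _ _ h h' hh])
    show "idm C X \<cdot> idm C X = idm C X" "idm C X \<cdot> idm C X = idm C X" using X by simp_all
    show "zmor C Z W \<cdot> zmor C W Z = idm C W" using id_zero_obj[OF W(1)] WO by simp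
    show "zmor C W Z \<cdot> zmor C Z W = idm C Z" using id_zero_obj[OF z] WO by simp
    show "f \<cdot> zmor C W Z = idm C X \<cdot> i"
      using hom_from_zero_unique[OF W(1)] f W(2) comp_hom zmor_hom WO id_hom X by metis
    show "h \<cdot> idm C X = h \<cdot> idm C X" ..
  qed
qed

lemma confl_between_zeros: "is_zero X \<Longrightarrow> is_zero Y \<Longrightarrow> is_zero Z \<Longrightarrow> f \<in> Hom X Y \<Longrightarrow> g \<in> Hom Y Z \<Longrightarrow> (f, g) \<in> confl C"
proof -
  assume z: "is_zero X" "is_zero Y" "is_zero Z" and f: "f \<in> Hom X Y" and g: "g \<in> Hom Y Z"
  have O: "X \<in> Ob C" "Y \<in> Ob C" using z zero_ob by auto
  show ?thesis
  proof (rule confl_iso_to_zero[OF f zmor_hom[OF O(2) O(1)] _ _ g z(3)])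
    show "zmor C Y X \<cdot> f = idm C X" using hom_from_zero_unique[OF z(1)] comp_hom[OF f zmor_hom[OF O(2) O(1)]] id_hom[OF O(1)] by metis
    show "f \<cdot> zmor C Y X = idm C Y" using hom_from_zero_unique[OF z(2)] comp_hom[OF zmor_hom[OF O(2) O(1)] f] id_hom[OF O(2)] by metis
  qed
qed

section \<open>Biproducts\<close>

definition is_biproduct where "is_biproduct A B S j1 j2 q1 q2 \<longleftrightarrow> j1 \<in> Hom A S \<and> j2 \<in> Hom B S \<and> q1 \<in> Hom S A \<and> q2 \<in> Hom S B \<and>
   q1 \<cdot> j1 = idm C A \<and> q2 \<cdot> j2 = idm C B \<and> q2 \<cdot> j1 = zmor C A B \<and> q1 \<cdot> j2 = zmor C B A \<and>
   j1 \<cdot> q1 \<boxplus> j2 \<cdot> q2 = idm C S"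

lemma is_biproduct_swap: "is_biproduct A B S j1 j2 q1 q2 \<Longrightarrow> is_biproduct B A S j2 j1 q2 q1"
  unfolding is_biproduct_def
proof (elim conjE, intro conjI)
  assume h: "j1 \<in> Hom A S" "j2 \<in> Hom B S" "q1 \<in> Hom S A" "q2 \<in> Hom S B" and e: "j1 \<cdot> q1 \<boxplus> j2 \<cdot> q2 = idm C S"
  have "j2 \<cdot> q2 \<boxplus> j1 \<cdot> q1 = j1 \<cdot> q1 \<boxplus> j2 \<cdot> q2" using h homD by (intro add_comm) auto
  then show "j2 \<cdot> q2 \<boxplus> j1 \<cdot> q1 = idm C S" using e by simp
qed

text \<open>The biproduct is the pushout of the admissible monomorphism \<open>0 \<rightarrow> B\<close> along \<open>0 \<rightarrow> A\<close>,
  so by axiom E2 the first injection is, up to isomorphism, an admissible monomorphism.\<close>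
lemma biproduct_pushout_of_zero:
  assumes bp: "is_biproduct A B S j1 j2 q1 q2"
  obtains P i' f' u where "adm_mono C i'" "i' \<in> Hom A P" "f' \<in> Hom B P" "u \<in> Hom P S"
    "u \<cdot> i' = j1" "u \<cdot> f' = j2" "(i' \<cdot> q1 \<boxplus> f' \<cdot> q2) \<cdot> u = idm C P"
proof -
  have hj1: "j1 \<in> Hom A S" and hj2: "j2 \<in> Hom B S" and hq1: "q1 \<in> Hom S A" and hq2: "q2 \<in> Hom S B"
    and e1: "q1 \<cdot> j1 = idm C A" and e2: "q2 \<cdot> j2 = idm C B" and e3: "q2 \<cdot> j1 = zmor C A B"
    and e4: "q1 \<cdot> j2 = zmor C B A"
    using bp unfolding is_biproduct_def by auto
  note H = hj1 hj2 hq1 hq2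
  note HT = H[THEN homD(1)] H[THEN homD(2)] H[THEN homD(3)] H[THEN homD(4)] H[THEN homD(5)]
  have AO: "A \<in> Ob C" "B \<in> Ob C" "S \<in> Ob C" using HT by auto
  obtain i0 where cf0: "(i0, idm C B) \<in> confl C" using confl_id_epi[OF AO(2)] by blast
  define K where "K = dom C i0"
  have K: "is_zero K" "i0 \<in> Hom K B" using kernel_of_id_is_zero[OF cf0 AO(2)] K_def by auto
  have KO: "K \<in> Ob C" using K zero_ob by auto
  have "adm_mono C i0" using cf0 unfolding adm_mono_def by blast
  then obtain i' f' where po: "is_pushout C i0 (zmor C K A) i' f'" and am': "adm_mono C i'"
    using pushout_adm_mono zmor_mor[OF KO AO(1)] K homD by (metis zmor_dom KO AO(1))
  have i'M: "i' \<in> Mor C" "f' \<in> Mor C" "dom C i' = A" "dom C f' = B" "cod C i' = cod C f'"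
    "f' \<cdot> i0 = i' \<cdot> zmor C K A"
    using po K KO AO unfolding is_pushout_def by (auto simp: homs_iff)
  define P where "P = cod C f'"
  have PO: "P \<in> Ob C" using i'M P_def by simp
  have hi': "i' \<in> Hom A P" and hf': "f' \<in> Hom B P" using i'M P_def by auto
  note HT2 = hi'[THEN homD(1)] hf'[THEN homD(1)] hi'[THEN homD(2)] hf'[THEN homD(2)]
    hi'[THEN homD(3)] hf'[THEN homD(3)]
  have univ: "\<And>X g h. X \<in> Ob C \<Longrightarrow> g \<in> Hom B X \<Longrightarrow> h \<in> Hom A X \<Longrightarrow> g \<cdot> i0 = h \<cdot> zmor C K A \<Longrightarrow>
      \<exists>!u. u \<in> Hom P X \<and> u \<cdot> f' = g \<and> u \<cdot> i' = h"
    using po K KO AO i'M unfolding is_pushout_def P_def by (simp add: homs_iff)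
  have "j2 \<cdot> i0 = j1 \<cdot> zmor C K A"
    using hom_from_zero_unique[OF K(1)] comp_hom[OF K(2) hj2] comp_hom[OF zmor_hom[OF KO AO(1)] hj1] by metis
  then obtain u where u: "u \<in> Hom P S" "u \<cdot> f' = j2" "u \<cdot> i' = j1" using univ[OF AO(3) hj2 hj1] by blast
  note uT = u(1)[THEN homD(1)] u(1)[THEN homD(2)] u(1)[THEN homD(3)]
  define v where "v = i' \<cdot> q1 \<boxplus> f' \<cdot> q2"
  have vT: "v \<in> Mor C" "dom C v = S" "cod C v = P" unfolding v_def using HT HT2 by auto
  have "v \<cdot> j1 = i' \<cdot> (q1 \<cdot> j1) \<boxplus> f' \<cdot> (q2 \<cdot> j1)" "v \<cdot> j2 = i' \<cdot> (q1 \<cdot> j2) \<boxplus> f' \<cdot> (q2 \<cdot> j2)"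
    unfolding v_def using HT HT2 by (simp_all add: comp_add_right del: assoc) (simp_all add: assoc)
  then have vj: "v \<cdot> j1 = i'" "v \<cdot> j2 = f'" using e1 e2 e3 e4 HT HT2 AO by simp_all
  have "\<exists>!w. w \<in> Hom P P \<and> w \<cdot> f' = f' \<and> w \<cdot> i' = i'" using univ[OF PO hf' hi'] i'M by simp
  moreover have "v \<cdot> u \<in> Hom P P" "(v \<cdot> u) \<cdot> f' = f'" "(v \<cdot> u) \<cdot> i' = i'" using u vj vT uT HT2 by auto
  moreover have "idm C P \<in> Hom P P" "idm C P \<cdot> f' = f'" "idm C P \<cdot> i' = i'" using PO HT2 id_hom by simp_all
  ultimately have "v \<cdot> u = idm C P" by blast
  then show thesis using that[OF am' hi' hf' u(1) u(3) u(2)] unfolding v_def by blast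
qed

lemma adm_epi_cancel:
  assumes cf: "(i, p) \<in> confl C" and p: "p \<in> Hom B D"
    and g: "g \<in> Hom D X" and h: "h \<in> Hom D X" and gh: "g \<cdot> p = h \<cdot> p"
  shows "g = h"
proof -
  have gT: "g \<in> Mor C" "dom C g = D" "cod C g = X" "X \<in> Ob C"
    and pT: "p \<in> Mor C" "dom C p = B" "cod C p = D"
    using g p homD by blast+
  have "is_kernel_cokernel_pair C i p" by (rule confl_kernel_cokernel[OF cf])
  then have "i \<in> Mor C \<and> cod C i = dom C p \<and> p \<cdot> i = zmor C (dom C i) (cod C p) \<and> cokernel_univ i p"
    unfolding is_kernel_cokernel_pair_iff by blast
  then have iT: "i \<in> Mor C" "cod C i = B" and pi: "p \<cdot> i = zmor C (dom C i) D"
    and cok: "cokernel_univ i p"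
    using pT by auto
  have "g \<cdot> p \<in> Hom (cod C i) X" using comp_hom[OF p g] iT by simp
  moreover have "(g \<cdot> p) \<cdot> i = zmor C (dom C i) X" using pi iT gT pT by simp
  ultimately have "\<exists>!u. u \<in> Hom (cod C p) X \<and> u \<cdot> p = g \<cdot> p"
    by (rule cok[unfolded cokernel_univ_def, rule_format, OF gT(4)])
  then show ?thesis using g h gh pT(3) by (metis (no_types, lifting))
qed

lemma biproduct_split_confl:
  assumes bp: "is_biproduct A B S j1 j2 q1 q2"
  shows "(j1, q2) \<in> confl C"
proof -
  have hj1: "j1 \<in> Hom A S" and hj2: "j2 \<in> Hom B S" and hq1: "q1 \<in> Hom S A" and hq2: "q2 \<in> Hom S B"
    and e2: "q2 \<cdot> j2 = idm C B" and e3: "q2 \<cdot> j1 = zmor C A B" and e5: "j1 \<cdot> q1 \<boxplus> j2 \<cdot> q2 = idm C S"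
    using bp unfolding is_biproduct_def by auto
  note H = hj1 hj2 hq1 hq2
  note HT = H[THEN homD(1)] H[THEN homD(2)] H[THEN homD(3)] H[THEN homD(4)] H[THEN homD(5)]
  obtain P i' f' u where am': "adm_mono C i'" and hi': "i' \<in> Hom A P" and hf': "f' \<in> Hom B P"
    and u: "u \<in> Hom P S" "u \<cdot> i' = j1" "u \<cdot> f' = j2" and vu: "(i' \<cdot> q1 \<boxplus> f' \<cdot> q2) \<cdot> u = idm C P"
    by (rule biproduct_pushout_of_zero[OF bp])
  define v where "v = i' \<cdot> q1 \<boxplus> f' \<cdot> q2"
  obtain p'' where cf: "(i', p'') \<in> confl C" using am' unfolding adm_mono_def by blast
  have kcp: "is_kernel_cokernel_pair C i' p''" by (rule confl_kernel_cokernel[OF cf])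
  define Q where "Q = cod C p''"
  have i'T: "i' \<in> Mor C" "dom C i' = A" "cod C i' = P" using hi' homD by blast+
  have hp'': "p'' \<in> Hom P Q" and pi: "p'' \<cdot> i' = zmor C A Q"
    using kcp i'T unfolding is_kernel_cokernel_pair_def Q_def by auto
  have QO: "Q \<in> Ob C" using hp'' homD by blast
  have cok: "\<And>X f. X \<in> Ob C \<Longrightarrow> f \<in> Hom P X \<Longrightarrow> f \<cdot> i' = zmor C A X \<Longrightarrow> \<exists>!g. g \<in> Hom Q X \<and> g \<cdot> p'' = f"
    using kcp hi' unfolding is_kernel_cokernel_pair_def Q_def by (simp add: homs_iff)
  note H2 = hi' hf' hp'' u(1)
  note HT2 = H2[THEN homD(1)] H2[THEN homD(2)] H2[THEN homD(3)] H2[THEN homD(4)] H2[THEN homD(5)]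
  have hv: "v \<in> Hom S P" unfolding v_def using HT HT2 by auto
  have uv: "u \<cdot> v = idm C S"
  proof -
    have "u \<cdot> v = (u \<cdot> i') \<cdot> q1 \<boxplus> (u \<cdot> f') \<cdot> q2" unfolding v_def using HT HT2
      by (simp add: comp_add_left del: assoc) (simp add: assoc)
    then show ?thesis using u e5 by simp
  qed
  have "(q2 \<cdot> u) \<cdot> i' = zmor C A B" using u e3 HT HT2 by simp
  moreover have "q2 \<cdot> u \<in> Hom P B" using comp_hom u(1) hq2 by blast
  ultimately obtain c where c: "c \<in> Hom Q B" "c \<cdot> p'' = q2 \<cdot> u" using cok HT by blast
  note cT = c(1)[THEN homD(1)] c(1)[THEN homD(2)] c(1)[THEN homD(3)]
  define c' where "c' = p'' \<cdot> f'"
  have hc': "c' \<in> Hom B Q" unfolding c'_def using comp_hom hf' hp'' by blast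
  have "c \<cdot> c' = (q2 \<cdot> u) \<cdot> f'" unfolding c'_def using c cT HT2 by (simp flip: assoc)
  then have cc1: "c \<cdot> c' = idm C B" using u e2 HT HT2 by simp
  have "p'' = p'' \<cdot> (v \<cdot> u)" using vu HT2 unfolding v_def by simp
  also have "\<dots> = (p'' \<cdot> i') \<cdot> (q1 \<cdot> u) \<boxplus> (p'' \<cdot> f') \<cdot> (q2 \<cdot> u)" unfolding v_def using HT HT2
    by (simp add: comp_add_left comp_add_right del: assoc) (simp add: assoc)
  also have "\<dots> = (c' \<cdot> c) \<cdot> p''" unfolding c'_def using pi c HT HT2 cT by simp
  finally have "(c' \<cdot> c) \<cdot> p'' = p''" by simp
  also have "\<dots> = idm C Q \<cdot> p''" using HT2 by simp
  finally have cc2: "c' \<cdot> c = idm C Q"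
    using adm_epi_cancel[OF cf hp''] comp_hom[OF c(1) hc'] id_hom[OF QO] by blast
  show ?thesis
  proof (rule confl_iso[OF cf hi' hp'' hj1 hq2 id_hom id_hom _ _ u(1) hv vu[folded v_def] uv c(1) hc' cc2 cc1])
    show "j1 \<cdot> idm C A = u \<cdot> i'" "q2 \<cdot> u = c \<cdot> p''" using u c HT by simp_all
  qed (use HT(13) in simp_all)
qed

definition biprod_choice where "biprod_choice A B = (SOME t. case t of (S, j1, j2, q1, q2) \<Rightarrow> is_biproduct A B S j1 j2 q1 q2)"
definition biprod where "biprod A B = fst (biprod_choice A B)"
definition inj1 where "inj1 A B = fst (snd (biprod_choice A B))"
definition inj2 where "inj2 A B = fst (snd (snd (biprod_choice A B)))"
definition prj1 where "prj1 A B = fst (snd (snd (snd (biprod_choice A B))))"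
definition prj2 where "prj2 A B = snd (snd (snd (snd (biprod_choice A B))))"

lemma biprod_is_biproduct: "A \<in> Ob C \<Longrightarrow> B \<in> Ob C \<Longrightarrow> is_biproduct A B (biprod A B) (inj1 A B) (inj2 A B) (prj1 A B) (prj2 A B)"
proof -
  assume "A \<in> Ob C" "B \<in> Ob C"
  then have "\<exists>S j1 j2 q1 q2. is_biproduct A B S j1 j2 q1 q2"
    using additive[unfolded is_additive_def, THEN conjunct2, THEN conjunct2] unfolding is_biproduct_def by blast
  then have "\<exists>t. case t of (S, j1, j2, q1, q2) \<Rightarrow> is_biproduct A B S j1 j2 q1 q2" by auto
  then have "case biprod_choice A B of (S, j1, j2, q1, q2) \<Rightarrow> is_biproduct A B S j1 j2 q1 q2"
    unfolding biprod_choice_def by (rule someI_ex)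
  then show ?thesis unfolding biprod_def inj1_def inj2_def prj1_def prj2_def by (auto split: prod.splits)
qed

lemma biprod_homs: assumes "A \<in> Ob C" "B \<in> Ob C"
  shows "inj1 A B \<in> Hom A (biprod A B)" "inj2 A B \<in> Hom B (biprod A B)" "prj1 A B \<in> Hom (biprod A B) A" "prj2 A B \<in> Hom (biprod A B) B"
proof -
  note h = biprod_is_biproduct[OF assms, unfolded is_biproduct_def]
  show "inj1 A B \<in> Hom A (biprod A B)" using h by blast
  show "inj2 A B \<in> Hom B (biprod A B)" using h by blast
  show "prj1 A B \<in> Hom (biprod A B) A" using h by blast
  show "prj2 A B \<in> Hom (biprod A B) B" using h by blast
qed

lemma biprod_ob[simp]: "A \<in> Ob C \<Longrightarrow> B \<in> Ob C \<Longrightarrow> biprod A B \<in> Ob C"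
  using biprod_homs(1) homD(5) by blast

lemma biprod_simps[simp]: assumes "A \<in> Ob C" "B \<in> Ob C"
  shows "inj1 A B \<in> Mor C" "dom C (inj1 A B) = A" "cod C (inj1 A B) = biprod A B"
    "inj2 A B \<in> Mor C" "dom C (inj2 A B) = B" "cod C (inj2 A B) = biprod A B"
    "prj1 A B \<in> Mor C" "dom C (prj1 A B) = biprod A B" "cod C (prj1 A B) = A"
    "prj2 A B \<in> Mor C" "dom C (prj2 A B) = biprod A B" "cod C (prj2 A B) = B"
  using biprod_homs[OF assms] unfolding homs_iff by simp_all

lemma biprod_eqs[simp]: assumes "A \<in> Ob C" "B \<in> Ob C"
  shows "prj1 A B \<cdot> inj1 A B = idm C A" "prj2 A B \<cdot> inj2 A B = idm C B"
    "prj2 A B \<cdot> inj1 A B = zmor C A B" "prj1 A B \<cdot> inj2 A B = zmor C B A"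
    "inj1 A B \<cdot> prj1 A B \<boxplus> inj2 A B \<cdot> prj2 A B = idm C (biprod A B)"
proof -
  note h = biprod_is_biproduct[OF assms, unfolded is_biproduct_def]
  show "prj1 A B \<cdot> inj1 A B = idm C A" using h by blast
  show "prj2 A B \<cdot> inj2 A B = idm C B" using h by blast
  show "prj2 A B \<cdot> inj1 A B = zmor C A B" using h by blast
  show "prj1 A B \<cdot> inj2 A B = zmor C B A" using h by blast
  show "inj1 A B \<cdot> prj1 A B \<boxplus> inj2 A B \<cdot> prj2 A B = idm C (biprod A B)" using h by blast
qed

lemma biprod_eqs_assoc[simp]: assumes "A \<in> Ob C" "B \<in> Ob C" "x \<in> Mor C"
  shows "cod C x = A \<Longrightarrow> prj1 A B \<cdot> (inj1 A B \<cdot> x) = x" "cod C x = B \<Longrightarrow> prj2 A B \<cdot> (inj2 A B \<cdot> x) = x"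
    "cod C x = A \<Longrightarrow> prj2 A B \<cdot> (inj1 A B \<cdot> x) = zmor C (dom C x) B"
    "cod C x = B \<Longrightarrow> prj1 A B \<cdot> (inj2 A B \<cdot> x) = zmor C (dom C x) A"
  using assms by (simp_all flip: assoc)

lemma confl_inj1_prj2: "A \<in> Ob C \<Longrightarrow> B \<in> Ob C \<Longrightarrow> (inj1 A B, prj2 A B) \<in> confl C"
  by (rule biproduct_split_confl[OF biprod_is_biproduct])

lemma confl_inj2_prj1: "A \<in> Ob C \<Longrightarrow> B \<in> Ob C \<Longrightarrow> (inj2 A B, prj1 A B) \<in> confl C"
  by (rule biproduct_split_confl[OF is_biproduct_swap[OF biprod_is_biproduct]])

lemma biprod_hom_ext_into: assumes "A \<in> Ob C" "B \<in> Ob C" "f \<in> Hom X (biprod A B)" "g \<in> Hom X (biprod A B)"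
  "prj1 A B \<cdot> f = prj1 A B \<cdot> g" "prj2 A B \<cdot> f = prj2 A B \<cdot> g" shows "f = g"
proof -
  note T = assms(3,4)[THEN homD(1)] assms(3,4)[THEN homD(2)] assms(3,4)[THEN homD(3)]
  have "f = (inj1 A B \<cdot> prj1 A B \<boxplus> inj2 A B \<cdot> prj2 A B) \<cdot> f" using T assms by simp
  also have "\<dots> = inj1 A B \<cdot> (prj1 A B \<cdot> f) \<boxplus> inj2 A B \<cdot> (prj2 A B \<cdot> f)" using T assms(1-4)
    by (simp add: comp_add_right del: assoc biprod_eqs) (simp add: assoc)
  also have "\<dots> = inj1 A B \<cdot> (prj1 A B \<cdot> g) \<boxplus> inj2 A B \<cdot> (prj2 A B \<cdot> g)" using assms by simp
  also have "\<dots> = (inj1 A B \<cdot> prj1 A B \<boxplus> inj2 A B \<cdot> prj2 A B) \<cdot> g" using T assms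
    by (simp add: comp_add_right del: assoc biprod_eqs) (simp add: assoc)
  also have "\<dots> = g" using T assms by simp
  finally show ?thesis .
qed

lemma biprod_hom_ext_from: assumes "A \<in> Ob C" "B \<in> Ob C" "f \<in> Hom (biprod A B) X" "g \<in> Hom (biprod A B) X"
  "f \<cdot> inj1 A B = g \<cdot> inj1 A B" "f \<cdot> inj2 A B = g \<cdot> inj2 A B" shows "f = g"
proof -
  note T = assms(3,4)[THEN homD(1)] assms(3,4)[THEN homD(2)] assms(3,4)[THEN homD(3)]
  have "f = f \<cdot> (inj1 A B \<cdot> prj1 A B \<boxplus> inj2 A B \<cdot> prj2 A B)" using T assms by simp
  also have "\<dots> = (f \<cdot> inj1 A B) \<cdot> prj1 A B \<boxplus> (f \<cdot> inj2 A B) \<cdot> prj2 A B" using T assms(1-4)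
    by (simp add: comp_add_left del: assoc biprod_eqs) (simp add: assoc)
  also have "\<dots> = (g \<cdot> inj1 A B) \<cdot> prj1 A B \<boxplus> (g \<cdot> inj2 A B) \<cdot> prj2 A B" using assms by (simp del: assoc)
  also have "\<dots> = g \<cdot> (inj1 A B \<cdot> prj1 A B \<boxplus> inj2 A B \<cdot> prj2 A B)" using T assms
    by (simp add: comp_add_left del: assoc biprod_eqs) (simp add: assoc)
  also have "\<dots> = g" using T assms by simp
  finally show ?thesis .
qed

lemma add_neg_cancel1[simp]: "f \<in> Mor C \<Longrightarrow> g \<in> Mor C \<Longrightarrow> dom C f = dom C g \<Longrightarrow> cod C f = cod C g \<Longrightarrow> f \<boxplus> (neg f \<boxplus> g) = g"
  by (simp flip: add_assoc)

lemma add_neg_cancel2[simp]: "f \<in> Mor C \<Longrightarrow> g \<in> Mor C \<Longrightarrow> dom C f = dom C g \<Longrightarrow> cod C f = cod C g \<Longrightarrow> neg f \<boxplus> (f \<boxplus> g) = g"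
  by (simp flip: add_assoc)

definition pair where "pair A B f g = inj1 A B \<cdot> f \<boxplus> inj2 A B \<cdot> g"
definition copair where "copair A B f g = f \<cdot> prj1 A B \<boxplus> g \<cdot> prj2 A B"

lemma pair_simps[simp]:
  assumes "A \<in> Ob C" "B \<in> Ob C" "f \<in> Mor C" "g \<in> Mor C" "cod C f = A" "cod C g = B" "dom C f = dom C g"
  shows "pair A B f g \<in> Mor C" "dom C (pair A B f g) = dom C f" "cod C (pair A B f g) = biprod A B"
    "prj1 A B \<cdot> pair A B f g = f" "prj2 A B \<cdot> pair A B f g = g"
  using assms unfolding pair_def by (simp_all add: comp_add_left)

lemma copair_simps[simp]:
  assumes "A \<in> Ob C" "B \<in> Ob C" "f \<in> Mor C" "g \<in> Mor C" "dom C f = A" "dom C g = B" "cod C f = cod C g"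
  shows "copair A B f g \<in> Mor C" "dom C (copair A B f g) = biprod A B" "cod C (copair A B f g) = cod C f"
    "copair A B f g \<cdot> inj1 A B = f" "copair A B f g \<cdot> inj2 A B = g"
  using assms unfolding copair_def by (simp_all add: comp_add_right)

lemma pair_comp[simp]:
  assumes "A \<in> Ob C" "B \<in> Ob C" "f \<in> Mor C" "g \<in> Mor C" "cod C f = A" "cod C g = B" "dom C f = dom C g"
    "h \<in> Mor C" "cod C h = dom C f"
  shows "pair A B f g \<cdot> h = pair A B (f \<cdot> h) (g \<cdot> h)"
  using assms unfolding pair_def by (simp add: comp_add_right)

lemma comp_copair:
  assumes "A \<in> Ob C" "B \<in> Ob C" "f \<in> Mor C" "g \<in> Mor C" "dom C f = A" "dom C g = B" "cod C f = cod C g"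
    "h \<in> Mor C" "dom C h = cod C f"
  shows "h \<cdot> copair A B f g = copair A B (h \<cdot> f) (h \<cdot> g)"
  using assms unfolding copair_def by (simp add: comp_add_left)

lemma copair_pair[simp]:
  assumes "A \<in> Ob C" "B \<in> Ob C" "f \<in> Mor C" "g \<in> Mor C" "dom C f = A" "dom C g = B" "cod C f = cod C g"
    "f' \<in> Mor C" "g' \<in> Mor C" "cod C f' = A" "cod C g' = B" "dom C f' = dom C g'"
  shows "copair A B f g \<cdot> pair A B f' g' = f \<cdot> f' \<boxplus> g \<cdot> g'"
  using assms unfolding copair_def pair_def by (simp add: comp_add_right comp_add_left)

lemma pair_eqI:
  assumes "A \<in> Ob C" "B \<in> Ob C" "x \<in> Hom X (biprod A B)" "prj1 A B \<cdot> x = f" "prj2 A B \<cdot> x = g"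
  shows "x = pair A B f g"
proof -
  have T: "x \<in> Mor C" "dom C x = X" "cod C x = biprod A B" using assms(3) homD by blast+
  show ?thesis
    by (rule biprod_hom_ext_into[OF assms(1,2,3)]) (use T assms in \<open>auto simp flip: assms(4,5)\<close>)
qed

lemma inj1_comp: "A \<in> Ob C \<Longrightarrow> B \<in> Ob C \<Longrightarrow> x \<in> Mor C \<Longrightarrow> cod C x = A \<Longrightarrow>
   inj1 A B \<cdot> x = pair A B x (zmor C (dom C x) B)"
  by (rule pair_eqI[of A B _ "dom C x"]) (auto intro!: homI)

lemma comp_prj2: "A \<in> Ob C \<Longrightarrow> B \<in> Ob C \<Longrightarrow> x \<in> Mor C \<Longrightarrow> dom C x = B \<Longrightarrow>
   x \<cdot> prj2 A B = copair A B (zmor C A (cod C x)) x"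
  by (rule biprod_hom_ext_from[of A B _ "cod C x"]) (auto intro!: homI)

lemma pair_id: "A \<in> Ob C \<Longrightarrow> B \<in> Ob C \<Longrightarrow> pair A B (prj1 A B) (prj2 A B) = idm C (biprod A B)"
  unfolding pair_def by simp

text \<open>The shear automorphism \<open>(a, b) \<mapsto> (a, m a + b)\<close> of \<open>A \<oplus> B\<close> carries the split conflation
  \<open>A \<rightarrowtail> A \<oplus> B \<twoheadrightarrow> B\<close> onto this one.\<close>
lemma confl_graph_copair:
  assumes O: "A \<in> Ob C" "B \<in> Ob C" and m: "m \<in> Hom A B" and e: "e \<in> Hom A D"
    and s: "s \<in> Hom B D" "s' \<in> Hom D B" "s' \<cdot> s = idm C B" "s \<cdot> s' = idm C D"
    and sm: "s \<cdot> m = neg e"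
  shows "(pair A B (idm C A) m, copair A B e s) \<in> confl C"
proof -
  have mT: "m \<in> Mor C" "dom C m = A" "cod C m = B" using m homD by blast+
  have eT: "e \<in> Mor C" "dom C e = A" "cod C e = D" using e homD by blast+
  have sT: "s \<in> Mor C" "dom C s = B" "cod C s = D" using s(1) homD by blast+
  define b where "b = pair A B (prj1 A B) (m \<cdot> prj1 A B \<boxplus> prj2 A B)"
  define b' where "b' = pair A B (prj1 A B) (neg m \<cdot> prj1 A B \<boxplus> prj2 A B)"
  have bT: "b \<in> Hom (biprod A B) (biprod A B)" "b' \<in> Hom (biprod A B) (biprod A B)"
    unfolding b_def b'_def using mT O by (auto intro!: homI)
  have "b' \<cdot> b = pair A B (prj1 A B) (neg m \<cdot> prj1 A B \<boxplus> (m \<cdot> prj1 A B \<boxplus> prj2 A B))"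
    unfolding b'_def using mT O bT homD by (simp add: b_def comp_add_right)
  then have bb1: "b' \<cdot> b = idm C (biprod A B)" using mT O by (simp add: pair_id)
  have "b \<cdot> b' = pair A B (prj1 A B) (m \<cdot> prj1 A B \<boxplus> (neg m \<cdot> prj1 A B \<boxplus> prj2 A B))"
    unfolding b_def using mT O bT homD by (simp add: b'_def comp_add_right)
  then have bb2: "b \<cdot> b' = idm C (biprod A B)" using mT O by (simp add: pair_id)
  have "copair A B e s \<cdot> b = e \<cdot> prj1 A B \<boxplus> ((s \<cdot> m) \<cdot> prj1 A B \<boxplus> s \<cdot> prj2 A B)"
    unfolding b_def using mT eT sT O by (simp add: comp_add_left)
  also have "\<dots> = s \<cdot> prj2 A B" unfolding sm using eT sT O by simp
  finally have sq2: "copair A B e s \<cdot> b = s \<cdot> prj2 A B" .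
  have sq1: "pair A B (idm C A) m \<cdot> idm C A = b \<cdot> inj1 A B"
    unfolding b_def using mT O by (simp add: comp_add_right)
  have "pair A B (idm C A) m \<in> Hom A (biprod A B)" "copair A B e s \<in> Hom (biprod A B) D"
    using mT eT sT O by (auto intro!: homI)
  then show ?thesis
    by (rule confl_iso[OF confl_inj1_prj2[OF O] biprod_homs(1)[OF O] biprod_homs(4)[OF O] _ _
          id_hom[OF O(1)] id_hom[OF O(1)] _ _ bT bb1 bb2 s sq1 sq2]) (use O in simp_all)
qed

section \<open>Acyclic complexes\<close>

definition susp :: "(nat \<Rightarrow> 'o) \<Rightarrow> nat \<Rightarrow> 'o" where "susp P n = (if n = 0 then Z0 else P (n - 1))"
definition susp_diff where "susp_diff P d n = (if n = 0 then zmor C (P 0) Z0 else neg (d (n - 1)))"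

lemma susp_simps[simp]: "susp P 0 = Z0" "susp P (Suc n) = P n"
  unfolding susp_def by auto

definition elem_ob where "elem_ob j Q n = (if n = j \<or> n = Suc j then Q else Z0)"
definition elem_diff where "elem_diff j Q u n = (if n = j then u else zmor C (elem_ob j Q (Suc n)) (elem_ob j Q n))"

lemma acyclicI:
  assumes "\<And>n. dd n \<in> Hom (Q (Suc n)) (Q n)"
    and "\<And>n. E n \<in> Hom (Q (Suc n)) (J n)" "\<And>n. M n \<in> Hom (J n) (Q n)" "\<And>n. dd n = M n \<cdot> E n"
    "\<And>n. (M (Suc n), E n) \<in> confl C"
    and "is_zero z" "q \<in> Hom (Q 0) z" "(M 0, q) \<in> confl C"
  shows "acyclic C Q dd"
  unfolding acyclic_def using assms by blast

lemma acyclic_hom: "acyclic C P d \<Longrightarrow> d n \<in> Hom (P (Suc n)) (P n)"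
  unfolding acyclic_def by blast

lemma acyclic_ob: "acyclic C P d \<Longrightarrow> P n \<in> Ob C"
  using acyclic_hom homD by blast

lemma acyclic_diff_diff: assumes "acyclic C P d" shows "d n \<cdot> d (Suc n) = zmor C (P (Suc (Suc n))) (P n)"
proof -
  obtain J e m where H: "\<And>n. e n \<in> Hom (P (Suc n)) (J n) \<and> m n \<in> Hom (J n) (P n) \<and>
                    d n = m n \<cdot> e n \<and> (m (Suc n), e n) \<in> confl C"
    using assms unfolding acyclic_def by blast
  have k: "is_kernel_cokernel_pair C (m (Suc n)) (e n)" using H confl_kernel_cokernel by blast
  have T: "e n \<in> Hom (P (Suc n)) (J n)" "m n \<in> Hom (J n) (P n)" "e (Suc n) \<in> Hom (P (Suc (Suc n))) (J (Suc n))"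
     "m (Suc n) \<in> Hom (J (Suc n)) (P (Suc n))" using H by blast+
  note TT = T[THEN homD(1)] T[THEN homD(2)] T[THEN homD(3)] T[THEN homD(4)] T[THEN homD(5)]
  have z: "e n \<cdot> m (Suc n) = zmor C (J (Suc n)) (J n)" using k TT unfolding is_kernel_cokernel_pair_def by simp
  have "d n \<cdot> d (Suc n) = m n \<cdot> ((e n \<cdot> m (Suc n)) \<cdot> e (Suc n))" using H TT by simp
  also have "\<dots> = zmor C (P (Suc (Suc n))) (P n)" unfolding z using TT by simp
  finally show ?thesis .
qed

lemma elem_acyclic: assumes Q: "Q \<in> Ob C" and u: "u \<in> Hom Q Q" and uu: "u \<cdot> u = idm C Q"
  shows "acyclic C (elem_ob j Q) (elem_diff j Q u)"
proof -
  define J where "J n = (if n = j then Q else Z0)" for n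
  define E where "E n = (if n = j then u else zmor C (elem_ob j Q (Suc n)) (J n))" for n
  define M where "M n = (if n = j then idm C Q else zmor C (J n) (elem_ob j Q n))" for n
  have dH: "\<And>n. elem_diff j Q u n \<in> Hom (elem_ob j Q (Suc n)) (elem_ob j Q n)"
    unfolding elem_diff_def elem_ob_def using u Q by (auto intro!: homI dest: homD)
  have EH: "\<And>n. E n \<in> Hom (elem_ob j Q (Suc n)) (J n)"
    unfolding E_def J_def elem_ob_def using u Q by (auto intro!: homI dest: homD)
  have MH: "\<And>n. M n \<in> Hom (J n) (elem_ob j Q n)"
    unfolding M_def J_def elem_ob_def using u Q by (auto intro!: homI dest: homD)
  show ?thesis
  proof (rule acyclicI[where Q="elem_ob j Q" and dd="elem_diff j Q u" and J=J and E=E and M=M and z=Z0, OF dH EH MH])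
    fix n
    show "elem_diff j Q u n = M n \<cdot> E n"
    proof (cases "n = j")
      case True then show ?thesis unfolding elem_diff_def M_def E_def using u Q by (simp add: homs_iff)
    next
      case False
      have "is_zero (J n)" unfolding J_def using False by simp
      then show ?thesis using comp_through_zero[OF _ EH MH] dH hom_from_zero_unique by (metis (no_types) False elem_diff_def)
    qed
    show "(M (Suc n), E n) \<in> confl C"
    proof -
      consider (a) "n = j" | (b) "Suc n = j" | (c) "n \<noteq> j" "Suc n \<noteq> j" by blast
      then show ?thesis
      proof cases
        case a
        have e: "M (Suc n) = zmor C Z0 Q" "E n = u" unfolding M_def E_def J_def elem_ob_def using a by auto
        show ?thesis unfolding e by (rule confl_zero_to_iso[OF zmor_hom is_zero_Z0 u u uu uu]) (use Q in simp_all)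
      next
        case b
        have e: "M (Suc n) = idm C Q" "E n = zmor C Q Z0" unfolding M_def E_def J_def elem_ob_def using b by auto
        show ?thesis unfolding e by (rule confl_iso_to_zero[OF id_hom id_hom _ _ zmor_hom is_zero_Z0]) (use Q in simp_all)
      next
        case c
        show ?thesis by (rule confl_between_zeros[OF _ _ _ MH EH]) (use c in \<open>simp_all add: J_def elem_ob_def\<close>)
      qed
    qed
  next
    show "zmor C (elem_ob j Q 0) Z0 \<in> Hom (elem_ob j Q 0) Z0" using Q by (intro zmor_hom) (simp_all add: elem_ob_def)
    show "(M 0, zmor C (elem_ob j Q 0) Z0) \<in> confl C"
    proof (cases "j = 0")
      case True
      have e: "M 0 = idm C Q" "elem_ob j Q 0 = Q" unfolding M_def elem_ob_def using True by auto
      show ?thesis unfolding e by (rule confl_iso_to_zero[OF id_hom id_hom _ _ zmor_hom is_zero_Z0]) (use Q in simp_all)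
    next
      case False
      show ?thesis by (rule confl_between_zeros[OF _ _ _ MH zmor_hom]) (use False Q in \<open>simp_all add: J_def elem_ob_def\<close>)
    qed
  qed simp
qed

lemma confl_neg_epi:
  assumes cf: "(i, p) \<in> confl C" and i: "i \<in> Hom A B" and p: "p \<in> Hom B D"
  shows "(i, neg p) \<in> confl C"
proof -
  have O: "A \<in> Ob C" "B \<in> Ob C" "D \<in> Ob C" using i p homD by blast+
  have pT: "p \<in> Mor C" "dom C p = B" "cod C p = D" using p homD by blast+
  have n: "neg (idm C D) \<in> Hom D D" "neg (idm C D) \<cdot> neg (idm C D) = idm C D"
    using neg_hom[of "idm C D"] O by simp_all
  have "neg p \<in> Hom B D" using neg_hom[of p] pT by simp
  then show ?thesis
    by (rule confl_iso[OF cf i p i _ id_hom id_hom _ _ id_hom id_hom _ _ n(1) n(1) n(2) n(2)])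
      (use O pT i[THEN homD(1)] i[THEN homD(2)] i[THEN homD(3)] in simp_all)
qed

lemma susp_acyclic: assumes "acyclic C P d" shows "acyclic C (susp P) (susp_diff P d)"
proof -
  obtain J e m z q where H: "\<And>n. e n \<in> Hom (P (Suc n)) (J n) \<and> m n \<in> Hom (J n) (P n) \<and>
                    d n = m n \<cdot> e n \<and> (m (Suc n), e n) \<in> confl C"
    and z: "is_zero z" and q: "q \<in> Hom (P 0) z" and mq: "(m 0, q) \<in> confl C"
    using assms unfolding acyclic_def by blast
  have PO: "P n \<in> Ob C" for n using acyclic_ob[OF assms] .
  have zO: "z \<in> Ob C" using z zero_ob by blast
  have eT: "e n \<in> Mor C" "dom C (e n) = P (Suc n)" "cod C (e n) = J n"
    and mT: "m n \<in> Mor C" "dom C (m n) = J n" "cod C (m n) = P n" for n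
    using H homD by blast+
  define J' where "J' n = (if n = 0 then z else J (n - 1))" for n
  define E' where "E' n = (if n = 0 then q else neg (e (n - 1)))" for n
  define M' where "M' n = (if n = 0 then zmor C z Z0 else m (n - 1))" for n
  have qT: "q \<in> Mor C" "dom C q = P 0" "cod C q = z" using q homD by blast+
  have dT: "d n \<in> Mor C" "dom C (d n) = P (Suc n)" "cod C (d n) = P n" for n
    using acyclic_hom[OF assms] homD by blast+
  have dH: "susp_diff P d n \<in> Hom (susp P (Suc n)) (susp P n)" for n
    by (cases n) (simp_all add: susp_diff_def homs_iff PO dT)
  have EH: "E' n \<in> Hom (susp P (Suc n)) (J' n)" for n
    by (cases n) (simp_all add: E'_def J'_def homs_iff qT eT)
  have MH: "M' n \<in> Hom (J' n) (susp P n)" for n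
    by (cases n) (simp_all add: M'_def J'_def homs_iff zO mT)
  have fact: "susp_diff P d n = M' n \<cdot> E' n" for n
    using H by (cases n) (simp_all add: susp_diff_def M'_def E'_def zO qT PO eT mT)
  have cf: "(M' (Suc n), E' n) \<in> confl C" for n
  proof (cases n)
    case (Suc n')
    have "(m (Suc n'), neg (e n')) \<in> confl C"
      using H[of n'] H[of "Suc n'"] by (blast intro: confl_neg_epi)
    then show ?thesis unfolding M'_def E'_def using Suc by simp
  qed (use mq in \<open>simp add: M'_def E'_def\<close>)
  have "zmor C (susp P 0) Z0 \<in> Hom (susp P 0) Z0" by (simp add: zmor_hom)
  moreover have "(M' 0, zmor C (susp P 0) Z0) \<in> confl C"
    unfolding M'_def by (rule confl_between_zeros[OF z is_zero_Z0 is_zero_Z0]) (simp_all add: zO zmor_hom)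
  ultimately show ?thesis
    by (rule acyclicI[where Q = "susp P" and dd = "susp_diff P d" and J = J' and E = E' and M = M',
          OF dH EH MH fact cf is_zero_Z0])
qed

lemma zero_acyclic: "acyclic C (\<lambda>n. Z0) (\<lambda>n. zmor C Z0 Z0)"
  by (rule acyclicI[where J="\<lambda>n. Z0" and E="\<lambda>n. zmor C Z0 Z0" and M="\<lambda>n. zmor C Z0 Z0" and z=Z0 and q="zmor C Z0 Z0"])
     (auto intro!: zmor_hom confl_between_zeros[OF is_zero_Z0 is_zero_Z0 is_zero_Z0])

section \<open>Truncated mapping cones\<close>

text \<open>The mapping cone of \<open>s: (P, d) \<rightarrow> (P, e)\<close>; its truncations \<open>tcone_ob P j\<close> filter it by degree.\<close>
definition cone_ob where "cone_ob P n = biprod (P n) (susp P n)"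
definition cone_diff where "cone_diff P e s d n = pair (P n) (susp P n)
   (copair (P (Suc n)) (susp P (Suc n)) (e n) (s n))
   (copair (P (Suc n)) (susp P (Suc n)) (zmor C (P (Suc n)) (susp P n)) (susp_diff P d n))"

definition tcone_ob where "tcone_ob P j n = (if n < j then cone_ob P n else if n = j then susp P n else Z0)"

end

locale involutive_ladder = exact_cat C for C :: "('o,'m) excat" +
  fixes P :: "nat \<Rightarrow> 'o" and d e s :: "nat \<Rightarrow> 'm"
  assumes P_ob[simp]: "P n \<in> Ob C"
    and d_hom: "d n \<in> Hom (P (Suc n)) (P n)"
    and e_hom: "e n \<in> Hom (P (Suc n)) (P n)"
    and s_hom: "s n \<in> Hom (P n) (P n)"
    and s_s[simp]: "s n \<cdot> s n = idm C (P n)"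
    and sd: "s n \<cdot> d n = e n \<cdot> s (Suc n)"
    and e_e[simp]: "e n \<cdot> e (Suc n) = zmor C (P (Suc (Suc n))) (P n)"
begin

lemma ladder_simps[simp]: "d n \<in> Mor C" "dom C (d n) = P (Suc n)" "cod C (d n) = P n"
  "e n \<in> Mor C" "dom C (e n) = P (Suc n)" "cod C (e n) = P n"
  "s n \<in> Mor C" "dom C (s n) = P n" "cod C (s n) = P n"
  using d_hom e_hom s_hom homD by blast+

lemma susp_ob[simp]: "susp P n \<in> Ob C" unfolding susp_def by simp

lemma cone_ob_ob[simp]: "cone_ob P n \<in> Ob C" unfolding cone_ob_def by simp

lemma susp_diff_simps[simp]: "susp_diff P d n \<in> Mor C" "dom C (susp_diff P d n) = P n" "cod C (susp_diff P d n) = susp P n"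
  unfolding susp_diff_def susp_def by (cases n; simp)+

text \<open>The cone of the isomorphism \<open>s\<close> is acyclic; its cycles in degree \<open>n\<close> form the graph of
  \<open>twist n: P n \<rightarrow> P (n - 1)\<close>.\<close>
definition twist where "twist n = (if n = 0 then zmor C (P 0) Z0 else neg (s (n - 1) \<cdot> e (n - 1)))"

lemma twist_simps[simp]: "twist n \<in> Mor C" "dom C (twist n) = P n" "cod C (twist n) = susp P n"
  unfolding twist_def susp_def by (cases n; simp)+

lemma s_s_cancel[simp]: "x \<in> Mor C \<Longrightarrow> cod C x = P n \<Longrightarrow> s n \<cdot> (s n \<cdot> x) = x"
  using s_s by (simp flip: assoc)

lemma e_e_zero_assoc[simp]: "x \<in> Mor C \<Longrightarrow> cod C x = P (Suc (Suc n)) \<Longrightarrow> e n \<cdot> (e (Suc n) \<cdot> x) = zmor C (dom C x) (P n)"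
  using e_e by (simp flip: assoc)

lemma twist_e: "twist n \<cdot> e n = zmor C (P (Suc n)) (susp P n)"
  unfolding twist_def susp_def by (cases n) simp_all

lemma twist_s: "twist n \<cdot> s n = susp_diff P d n"
proof (cases n)
  case 0 then show ?thesis unfolding twist_def susp_diff_def by simp
next
  case (Suc m)
  have "twist n \<cdot> s n = neg (s m \<cdot> (e m \<cdot> s (Suc m)))" unfolding twist_def using Suc by simp
  also have "\<dots> = neg (s m \<cdot> (s m \<cdot> d m))" using sd by simp
  also have "\<dots> = neg (d m)" by simp
  finally show ?thesis unfolding susp_diff_def using Suc by simp
qed

lemma cone_diff_hom: "cone_diff P e s d n \<in> Hom (cone_ob P (Suc n)) (cone_ob P n)"
  unfolding cone_diff_def cone_ob_def by (intro homI) simp_all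

lemma cone_diff_simps[simp]: "cone_diff P e s d n \<in> Mor C" "dom C (cone_diff P e s d n) = biprod (P (Suc n)) (P n)"
  "cod C (cone_diff P e s d n) = biprod (P n) (susp P n)"
  using cone_diff_hom[of n] homD unfolding cone_ob_def by auto

definition tcone_diff where "tcone_diff j n = (if Suc n < j then cone_diff P e s d n
   else if Suc n = j then cone_diff P e s d n \<cdot> inj2 (P (Suc n)) (P n) else zmor C (tcone_ob P j (Suc n)) (tcone_ob P j n))"
definition tcone_cyc where "tcone_cyc j n = (if n < j then P n else Z0)"
definition tcone_mono where "tcone_mono j n = (if n < j then pair (P n) (susp P n) (idm C (P n)) (twist n) else zmor C Z0 (tcone_ob P j n))"
definition tcone_epi where "tcone_epi j n = (if Suc n < j then copair (P (Suc n)) (P n) (e n) (s n)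
   else if Suc n = j then s n else zmor C (tcone_ob P j (Suc n)) Z0)"

lemma tcone_ob_ob[simp]: "tcone_ob P j n \<in> Ob C" unfolding tcone_ob_def by simp

lemma tcone_cyc_ob[simp]: "tcone_cyc j n \<in> Ob C" unfolding tcone_cyc_def by simp

lemma tcone_diff_hom: "tcone_diff j n \<in> Hom (tcone_ob P j (Suc n)) (tcone_ob P j n)"
  unfolding tcone_diff_def tcone_ob_def cone_ob_def cone_diff_def by (intro homI) auto

lemma tcone_epi_hom: "tcone_epi j n \<in> Hom (tcone_ob P j (Suc n)) (tcone_cyc j n)"
  unfolding tcone_epi_def tcone_ob_def cone_ob_def tcone_cyc_def by (intro homI) auto

lemma tcone_mono_hom: "tcone_mono j n \<in> Hom (tcone_cyc j n) (tcone_ob P j n)"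
  unfolding tcone_mono_def tcone_ob_def cone_ob_def tcone_cyc_def by (intro homI) auto

lemma tcone_diff_factor: "tcone_diff j n = tcone_mono j n \<cdot> tcone_epi j n"
proof -
  consider (a) "Suc n < j" | (b) "Suc n = j" | (c) "j \<le> n" by linarith
  then show ?thesis
  proof cases
    case a
    have "tcone_mono j n \<cdot> tcone_epi j n = pair (P n) (susp P n) (idm C (P n)) (twist n) \<cdot> copair (P (Suc n)) (P n) (e n) (s n)"
      unfolding tcone_mono_def tcone_epi_def using a by simp
    also have "\<dots> = pair (P n) (susp P n) (idm C (P n) \<cdot> copair (P (Suc n)) (P n) (e n) (s n))
        (twist n \<cdot> copair (P (Suc n)) (P n) (e n) (s n))" by (rule pair_comp) simp_all
    also have "\<dots> = pair (P n) (susp P n) (copair (P (Suc n)) (P n) (e n) (s n))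
        (copair (P (Suc n)) (P n) (twist n \<cdot> e n) (twist n \<cdot> s n))" by (simp add: comp_copair)
    also have "\<dots> = cone_diff P e s d n" unfolding cone_diff_def twist_e twist_s by simp
    finally show ?thesis unfolding tcone_diff_def using a by simp
  next
    case b
    have "tcone_mono j n \<cdot> tcone_epi j n = pair (P n) (susp P n) (idm C (P n)) (twist n) \<cdot> s n"
      unfolding tcone_mono_def tcone_epi_def using b by simp
    also have "\<dots> = pair (P n) (susp P n) (s n) (susp_diff P d n)" using twist_s by simp
    also have "\<dots> = cone_diff P e s d n \<cdot> inj2 (P (Suc n)) (P n)" unfolding cone_diff_def by simp
    finally show ?thesis unfolding tcone_diff_def using b by simp
  next
    case c
    have z: "is_zero (tcone_ob P j (Suc n))" unfolding tcone_ob_def using c is_zero_Z0 by simp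
    show ?thesis
      by (rule hom_from_zero_unique[OF z tcone_diff_hom comp_hom[OF tcone_epi_hom tcone_mono_hom]])
  qed
qed

lemma tcone_confl: "(tcone_mono j (Suc n), tcone_epi j n) \<in> confl C"
proof -
  consider (a) "Suc n < j" | (b) "Suc n = j" | (c) "j \<le> n" by linarith
  then show ?thesis
  proof cases
    case a
    have "s n \<cdot> twist (Suc n) = neg (e n)" unfolding twist_def by simp
    then show ?thesis unfolding tcone_mono_def tcone_epi_def using a
      by (simp add: confl_graph_copair[OF P_ob P_ob _ e_hom s_hom s_hom s_s s_s] homs_iff)
  next
    case b
    have W1: "tcone_mono j (Suc n) = zmor C Z0 (P n)" unfolding tcone_mono_def tcone_ob_def using b by (simp flip: b)
    have W2: "tcone_epi j n = s n" unfolding tcone_epi_def using b by simp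
    show ?thesis unfolding W1 W2
      by (rule confl_zero_to_iso[OF zmor_hom is_zero_Z0 s_hom s_hom s_s s_s]) simp_all
  next
    case c
    show ?thesis
      by (rule confl_between_zeros[OF _ _ _ tcone_mono_hom tcone_epi_hom]) (use c is_zero_Z0 in \<open>simp_all add: tcone_cyc_def tcone_ob_def\<close>)
  qed
qed

lemma tcone_confl_bottom: "(tcone_mono j 0, zmor C (tcone_ob P j 0) Z0) \<in> confl C"
proof (cases "j = 0")
  case True
  show ?thesis
    by (rule confl_between_zeros[OF _ _ _ tcone_mono_hom zmor_hom]) (use True is_zero_Z0 in \<open>simp_all add: tcone_cyc_def tcone_ob_def\<close>)
next
  case False
  have O: "P 0 \<in> Ob C" "Z0 \<in> Ob C" by simp_all
  have W1: "tcone_mono j 0 = pair (P 0) Z0 (idm C (P 0)) (twist 0)" unfolding tcone_mono_def using False by simp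
  have W2: "tcone_ob P j 0 = biprod (P 0) Z0" unfolding tcone_ob_def cone_ob_def using False by simp
  have h1: "pair (P 0) Z0 (idm C (P 0)) (twist 0) \<in> Hom (P 0) (biprod (P 0) Z0)" by (intro homI) simp_all
  have e2: "pair (P 0) Z0 (idm C (P 0)) (twist 0) \<cdot> prj1 (P 0) Z0 = idm C (biprod (P 0) Z0)"
  proof (rule biprod_hom_ext_into[OF O])
    show "pair (P 0) Z0 (idm C (P 0)) (twist 0) \<cdot> prj1 (P 0) Z0 \<in> Hom (biprod (P 0) Z0) (biprod (P 0) Z0)"
      using comp_hom[OF biprod_homs(3)[OF O] h1] .
    show "idm C (biprod (P 0) Z0) \<in> Hom (biprod (P 0) Z0) (biprod (P 0) Z0)" using id_hom O by simp
    show "prj1 (P 0) Z0 \<cdot> pair (P 0) Z0 (idm C (P 0)) (twist 0) \<cdot> prj1 (P 0) Z0 = prj1 (P 0) Z0 \<cdot> idm C (biprod (P 0) Z0)"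
      by (simp flip: assoc)
    show "prj2 (P 0) Z0 \<cdot> pair (P 0) Z0 (idm C (P 0)) (twist 0) \<cdot> prj1 (P 0) Z0 = prj2 (P 0) Z0 \<cdot> idm C (biprod (P 0) Z0)"
      by (rule hom_to_zero_unique[OF is_zero_Z0]) (intro homI; simp)+
  qed
  show ?thesis unfolding W1 W2
    by (rule confl_iso_to_zero[OF h1 biprod_homs(3)[OF O] _ e2 zmor_hom is_zero_Z0]) simp_all
qed

theorem tcone_acyclic: "acyclic C (tcone_ob P j) (tcone_diff j)"
  by (rule acyclicI[OF tcone_diff_hom tcone_epi_hom tcone_mono_hom tcone_diff_factor tcone_confl is_zero_Z0 zmor_hom tcone_confl_bottom]) simp_all

definition tcone_incl where "tcone_incl j n = (if n < j then idm C (cone_ob P n) else if n = j then inj2 (P n) (susp P n)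
   else zmor C Z0 (tcone_ob P (Suc j) n))"
definition tcone_proj where "tcone_proj j n = (if n < j then zmor C (cone_ob P n) Z0 else if n = j then prj1 (P j) (susp P j)
   else if n = Suc j then idm C (P j) else zmor C Z0 Z0)"

lemma tcone_incl_hom: "tcone_incl j n \<in> Hom (tcone_ob P j n) (tcone_ob P (Suc j) n)"
  unfolding tcone_incl_def tcone_ob_def cone_ob_def by (cases "n < j"; cases "n = j") (auto intro!: homI)

lemma tcone_proj_hom: "tcone_proj j n \<in> Hom (tcone_ob P (Suc j) n) (elem_ob j (P j) n)"
  unfolding tcone_proj_def tcone_ob_def cone_ob_def elem_ob_def
  by (cases "n < j"; cases "n = j"; cases "n = Suc j") (auto intro!: homI)

lemma tcone_incl_chain: "tcone_incl j n \<cdot> tcone_diff j n = tcone_diff (Suc j) n \<cdot> tcone_incl j (Suc n)"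
proof -
  consider (a) "Suc n < j" | (b) "Suc n = j" | (c) "j \<le> n" by linarith
  then show ?thesis
  proof cases
    case a then show ?thesis unfolding tcone_incl_def tcone_diff_def cone_ob_def by simp
  next
    case b then show ?thesis unfolding tcone_incl_def tcone_diff_def cone_ob_def by (simp add: b[symmetric])
  next
    case c
    have z: "is_zero (tcone_ob P j (Suc n))" unfolding tcone_ob_def using c by simp
    show ?thesis
      by (rule hom_from_zero_unique[OF z comp_hom[OF tcone_diff_hom tcone_incl_hom] comp_hom[OF tcone_incl_hom tcone_diff_hom]])
  qed
qed

lemma tcone_proj_chain: "tcone_proj j n \<cdot> tcone_diff (Suc j) n = elem_diff j (P j) (s j) n \<cdot> tcone_proj j (Suc n)"
proof -
  have dH: "\<And>n. elem_diff j (P j) (s j) n \<in> Hom (elem_ob j (P j) (Suc n)) (elem_ob j (P j) n)"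
    unfolding elem_diff_def elem_ob_def by (intro homI) auto
  consider (a) "n < j" | (b) "n = j" | (c) "Suc j \<le> n" by linarith
  then show ?thesis
  proof cases
    case a
    have z: "is_zero (elem_ob j (P j) n)" unfolding elem_ob_def using a by simp
    show ?thesis
      by (rule hom_to_zero_unique[OF z comp_hom[OF tcone_diff_hom tcone_proj_hom] comp_hom[OF tcone_proj_hom dH]])
  next
    case b then show ?thesis unfolding tcone_proj_def tcone_diff_def elem_diff_def cone_diff_def by simp
  next
    case c
    have z: "is_zero (tcone_ob P (Suc j) (Suc n))" unfolding tcone_ob_def using c by simp
    show ?thesis
      by (rule hom_from_zero_unique[OF z comp_hom[OF tcone_diff_hom tcone_proj_hom] comp_hom[OF tcone_proj_hom dH]])
  qed
qed

lemma tcone_incl_proj_confl: "(tcone_incl j n, tcone_proj j n) \<in> confl C"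
proof -
  consider (a) "n < j" | (b) "n = j" | (c) "n = Suc j" | (d) "Suc j < n" by linarith
  then show ?thesis
  proof cases
    case a
    have e: "tcone_incl j n = idm C (cone_ob P n)" "tcone_proj j n = zmor C (cone_ob P n) Z0" unfolding tcone_incl_def tcone_proj_def using a by auto
    show ?thesis unfolding e
      by (rule confl_iso_to_zero[OF id_hom id_hom _ _ zmor_hom]) simp_all
  next
    case b
    have e: "tcone_incl j n = inj2 (P n) (susp P n)" "tcone_proj j n = prj1 (P n) (susp P n)" unfolding tcone_incl_def tcone_proj_def using b by auto
    show ?thesis unfolding e by (rule confl_inj2_prj1) simp_all
  next
    case c
    have e: "tcone_incl j n = zmor C Z0 (P j)" "tcone_proj j n = idm C (P j)" unfolding tcone_incl_def tcone_proj_def tcone_ob_def using c by auto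
    show ?thesis unfolding e
      by (rule confl_zero_to_iso[OF zmor_hom is_zero_Z0 id_hom id_hom]) simp_all
  next
    case d
    show ?thesis
      by (rule confl_between_zeros[OF _ _ _ tcone_incl_hom tcone_proj_hom]) (use d in \<open>simp_all add: tcone_ob_def elem_ob_def\<close>)
  qed
qed

definition cone_incl where "cone_incl k n = (if n < Suc (Suc k) then inj1 (P n) (susp P n) else zmor C (P n) (tcone_ob P (Suc (Suc k)) n))"
definition cone_proj where "cone_proj k n = (if n < Suc (Suc k) then prj2 (P n) (susp P n)
   else if n = Suc (Suc k) then idm C (susp P n) else zmor C Z0 (susp P n))"

lemma cone_incl_hom: "cone_incl k n \<in> Hom (P n) (tcone_ob P (Suc (Suc k)) n)"
  unfolding cone_incl_def tcone_ob_def cone_ob_def by (intro homI) auto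

lemma cone_proj_hom: "cone_proj k n \<in> Hom (tcone_ob P (Suc (Suc k)) n) (susp P n)"
  unfolding cone_proj_def tcone_ob_def cone_ob_def by (cases "n < Suc (Suc k)"; cases "n = Suc (Suc k)") (auto intro!: homI)

lemma susp_diff_hom: "susp_diff P d n \<in> Hom (susp P (Suc n)) (susp P n)" by (intro homI) simp_all

context
  fixes k assumes P_zero: "\<And>n. k < n \<Longrightarrow> is_zero (P n)"
begin

lemma cone_incl_chain: "cone_incl k n \<cdot> e n = tcone_diff (Suc (Suc k)) n \<cdot> cone_incl k (Suc n)"
proof (cases "Suc n < Suc (Suc k)")
  case True
  have "cone_incl k n \<cdot> e n = pair (P n) (susp P n) (e n) (zmor C (P (Suc n)) (susp P n))"
    unfolding cone_incl_def using True by (simp add: inj1_comp)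
  also have "\<dots> = cone_diff P e s d n \<cdot> inj1 (P (Suc n)) (P n)" unfolding cone_diff_def by simp
  finally show ?thesis unfolding tcone_diff_def cone_incl_def using True by simp
next
  case False
  have z: "is_zero (P (Suc n))" using P_zero False by simp
  show ?thesis
    by (rule hom_from_zero_unique[OF z comp_hom[OF e_hom cone_incl_hom] comp_hom[OF cone_incl_hom tcone_diff_hom]])
qed

lemma cone_proj_chain: "cone_proj k n \<cdot> tcone_diff (Suc (Suc k)) n = susp_diff P d n \<cdot> cone_proj k (Suc n)"
proof -
  consider (a) "Suc n < Suc (Suc k)" | (b) "Suc n = Suc (Suc k)" | (c) "Suc (Suc k) < Suc n" by linarith
  then show ?thesis
  proof cases
    case a
    have "cone_proj k n \<cdot> tcone_diff (Suc (Suc k)) n = copair (P (Suc n)) (P n) (zmor C (P (Suc n)) (susp P n)) (susp_diff P d n)"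
      unfolding cone_proj_def tcone_diff_def cone_diff_def using a by simp
    also have "\<dots> = susp_diff P d n \<cdot> prj2 (P (Suc n)) (P n)" by (simp add: comp_prj2)
    finally show ?thesis unfolding cone_proj_def using a by simp
  next
    case b
    then show ?thesis unfolding cone_proj_def tcone_diff_def cone_diff_def by simp
  next
    case c
    have z: "is_zero (tcone_ob P (Suc (Suc k)) (Suc n))" unfolding tcone_ob_def using c by simp
    show ?thesis
      by (rule hom_from_zero_unique[OF z comp_hom[OF tcone_diff_hom cone_proj_hom] comp_hom[OF cone_proj_hom susp_diff_hom]])
  qed
qed

lemma cone_incl_proj_confl: "(cone_incl k n, cone_proj k n) \<in> confl C"
proof -
  consider (a) "n < Suc (Suc k)" | (b) "n = Suc (Suc k)" | (c) "Suc (Suc k) < n" by linarith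
  then show ?thesis
  proof cases
    case a
    then show ?thesis unfolding cone_incl_def cone_proj_def by (simp add: confl_inj1_prj2)
  next
    case b
    have e: "cone_incl k n = zmor C (P n) (susp P n)" "cone_proj k n = idm C (susp P n)" unfolding cone_incl_def cone_proj_def tcone_ob_def using b by auto
    show ?thesis unfolding e
      by (rule confl_zero_to_iso[OF zmor_hom _ id_hom id_hom]) (use P_zero b in simp_all)
  next
    case c
    have z: "is_zero (susp P n)" unfolding susp_def using c P_zero by simp
    show ?thesis
      by (rule confl_between_zeros[OF _ _ z cone_incl_hom cone_proj_hom]) (use c P_zero in \<open>simp_all add: tcone_ob_def\<close>)
  qed
qed

end

end

section \<open>Relations in \<open>K\<^sub>1\<close> one degree up\<close>

context exact_cat
begin

definition zero_bcx where "zero_bcx = ((\<lambda>n. Z0), (\<lambda>n. zmor C Z0 Z0), (\<lambda>n. zmor C Z0 Z0))"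

lemma zero_bcx_binacyc: "zero_bcx \<in> binacyc C k"
  unfolding zero_bcx_def binacyc_def using zero_acyclic by simp

lemma K_sub_iso:
  assumes X: "(P, d, d') \<in> binacyc C k" and Y: "(Q, e, e') \<in> binacyc C k"
    and f: "\<And>n. f n \<in> Hom (P n) (Q n)" and g: "\<And>n. g n \<in> Hom (Q n) (P n)"
    and fg: "\<And>n. g n \<cdot> f n = idm C (P n)" "\<And>n. f n \<cdot> g n = idm C (Q n)"
    and ch: "\<And>n. f n \<cdot> d n = e n \<cdot> f (Suc n)" "\<And>n. f n \<cdot> d' n = e' n \<cdot> f (Suc n)"
  shows "frag_of (Q, e, e') - frag_of (P, d, d') \<in> K_sub C k"
proof -
  have aY: "acyclic C Q e" "acyclic C Q e'" using Y unfolding binacyc_def by auto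
  have QO: "\<And>n. Q n \<in> Ob C" using acyclic_ob[OF aY(1)] .
  have eh: "\<And>n. e n \<in> Hom (Q (Suc n)) (Q n)" "\<And>n. e' n \<in> Hom (Q (Suc n)) (Q n)"
    using acyclic_hom aY by blast+
  have "bconfl C (P, d, d') (Q, e, e') zero_bcx"
    unfolding bconfl_def
  proof (intro exI conjI allI)
    show "bmor C (P, d, d') (Q, e, e') f" unfolding bmor_def using f ch by simp
    show "bmor C (Q, e, e') zero_bcx (\<lambda>n. zmor C (Q n) Z0)"
      unfolding bmor_def zero_bcx_def using eh QO by (auto simp: homs_iff intro: zmor_hom)
    show "(f n, zmor C (Q n) Z0) \<in> confl C" for n
      by (rule confl_iso_to_zero[OF f g fg(1) fg(2) zmor_hom is_zero_Z0]) (use QO in simp_all)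
  qed
  then have "frag_of (Q, e, e') - frag_of (P, d, d') - frag_of zero_bcx \<in> K_sub C k"
    by (rule K_sub_conflation[OF X Y zero_bcx_binacyc])
  moreover have "frag_of zero_bcx \<in> K_sub C k"
    using K_sub_diagonal zero_bcx_binacyc[of k] unfolding zero_bcx_def by blast
  ultimately show ?thesis using K_sub_closed(2) by fastforce
qed

definition elem_bcx where "elem_bcx j Q u v = (elem_ob j Q, elem_diff j Q u, elem_diff j Q v)"

lemma elem_bcx_binacyc:
  assumes "Q \<in> Ob C" "u \<in> Hom Q Q" "u \<cdot> u = idm C Q" "v \<in> Hom Q Q" "v \<cdot> v = idm C Q" "Suc j \<le> k"
  shows "elem_bcx j Q u v \<in> binacyc C k"
  unfolding elem_bcx_def binacyc_def using elem_acyclic assms by (auto simp: elem_ob_def)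

lemma elem_bcx_diagonal:
  assumes "Q \<in> Ob C" "Suc j \<le> k"
  shows "frag_of (elem_bcx j Q (idm C Q) (idm C Q)) \<in> K_sub C k"
proof -
  have "elem_bcx j Q (idm C Q) (idm C Q) \<in> binacyc C k"
    using assms id_hom by (intro elem_bcx_binacyc) simp_all
  then show ?thesis unfolding elem_bcx_def by (rule K_sub_diagonal)
qed

lemma pair2_eq_elem_bcx: "pair2 C X a b = elem_bcx 0 X a b"
  unfolding pair2_def elem_bcx_def elem_ob_def elem_diff_def Let_def
  by (auto intro!: ext simp: le_Suc_eq)

end

locale binary_involutive_ladder = exact_cat C for C :: "('o,'m) excat" +
  fixes k :: nat and P :: "nat \<Rightarrow> 'o" and d d' e e' s t :: "nat \<Rightarrow> 'm"
  assumes source: "(P, d, d') \<in> binacyc C k" and target: "(P, e, e') \<in> binacyc C k"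
    and s: "\<And>n. s n \<in> Hom (P n) (P n)" "\<And>n. s n \<cdot> s n = idm C (P n)" "\<And>n. s n \<cdot> d n = e n \<cdot> s (Suc n)"
    and t: "\<And>n. t n \<in> Hom (P n) (P n)" "\<And>n. t n \<cdot> t n = idm C (P n)" "\<And>n. t n \<cdot> d' n = e' n \<cdot> t (Suc n)"
begin

lemma acyclic_source_target: "acyclic C P d" "acyclic C P d'" "acyclic C P e" "acyclic C P e'"
  using source target unfolding binacyc_def by auto

lemma P_zero_above: "k < n \<Longrightarrow> is_zero (P n)"
  using source unfolding binacyc_def by auto

sublocale top: involutive_ladder C P d e s
  by unfold_locales (use acyclic_source_target s in \<open>auto intro: acyclic_ob acyclic_hom acyclic_diff_diff\<close>)

sublocale bot: involutive_ladder C P d' e' t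
  by unfold_locales (use acyclic_source_target t in \<open>auto intro: acyclic_ob acyclic_hom acyclic_diff_diff\<close>)

definition tcone_bcx where "tcone_bcx j = (tcone_ob P j, top.tcone_diff j, bot.tcone_diff j)"

abbreviation layer where "layer j \<equiv> elem_bcx j (P j) (s j) (t j)"

abbreviation susp_bcx where "susp_bcx \<equiv> (susp P, susp_diff P d, susp_diff P d')"

lemma tcone_bcx_binacyc:
  assumes "j \<le> Suc (Suc k)" shows "tcone_bcx j \<in> binacyc C (Suc k)"
proof -
  have "is_zero (tcone_ob P j n)" if "Suc k < n" for n
    using that assms P_zero_above by (auto simp: tcone_ob_def susp_def)
  then show ?thesis
    unfolding tcone_bcx_def binacyc_def using top.tcone_acyclic bot.tcone_acyclic by simp
qed

lemma layer_binacyc: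
  assumes "j \<le> Suc k" shows "layer j \<in> binacyc C (Suc k)"
proof -
  have "is_zero (elem_ob j (P j) n)" if "Suc k < n" for n
    using that assms P_zero_above by (auto simp: elem_ob_def)
  then show ?thesis unfolding elem_bcx_def binacyc_def using elem_acyclic s t by simp
qed

lemma susp_bcx_binacyc: "susp_bcx \<in> binacyc C (Suc k)"
proof -
  have "is_zero (susp P n)" if "Suc k < n" for n
    using that P_zero_above by (auto simp: susp_def)
  then show ?thesis unfolding binacyc_def using susp_acyclic acyclic_source_target by simp
qed

lemma tcone_bcx_step:
  assumes "j \<le> Suc k"
  shows "frag_of (tcone_bcx (Suc j)) - frag_of (tcone_bcx j) - frag_of (layer j) \<in> K_sub C (Suc k)"
proof (rule K_sub_conflation)
  show "bconfl C (tcone_bcx j) (tcone_bcx (Suc j)) (layer j)"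
    unfolding bconfl_def tcone_bcx_def elem_bcx_def bmor_def
    using top.tcone_incl_hom top.tcone_incl_chain bot.tcone_incl_chain
      top.tcone_proj_hom top.tcone_proj_chain bot.tcone_proj_chain top.tcone_incl_proj_confl
    by (intro exI[of _ "top.tcone_incl j"] exI[of _ "top.tcone_proj j"]) simp
qed (use assms tcone_bcx_binacyc layer_binacyc in auto)

lemma tcone_bcx_telescope:
  "J \<le> Suc (Suc k) \<Longrightarrow>
   frag_of (tcone_bcx J) - frag_of (tcone_bcx 0) - (\<Sum>j<J. frag_of (layer j)) \<in> K_sub C (Suc k)"
proof (induction J)
  case (Suc J)
  then have "J \<le> Suc (Suc k)" "J \<le> Suc k" by simp_all
  from K_sub_closed(2)[OF Suc.IH[OF this(1)] tcone_bcx_step[OF this(2)]]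
  show ?case by (simp add: algebra_simps)
qed (simp add: K_sub_closed)

text \<open>The complex \<open>tcone_bcx 0\<close> is zero and \<open>layer (Suc k)\<close> lives on zero objects, so
  both are diagonal.\<close>
lemma tcone_bcx_0: "frag_of (tcone_bcx 0) \<in> K_sub C (Suc k)"
proof -
  have "top.tcone_diff 0 = bot.tcone_diff 0"
    by (rule ext) (simp add: top.tcone_diff_def bot.tcone_diff_def)
  then show ?thesis
    using K_sub_diagonal tcone_bcx_binacyc[of 0] unfolding tcone_bcx_def by simp
qed

lemma layer_Suc_k: "frag_of (layer (Suc k)) \<in> K_sub C (Suc k)"
proof -
  have "s (Suc k) = t (Suc k)" using hom_from_zero_unique[OF P_zero_above s(1) t(1)] by simp
  then show ?thesis
    using K_sub_diagonal layer_binacyc[of "Suc k"] unfolding elem_bcx_def by simp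
qed

lemma cone_conflation:
  "frag_of (tcone_bcx (Suc (Suc k))) - frag_of (P, e, e') - frag_of susp_bcx \<in> K_sub C (Suc k)"
proof (rule K_sub_conflation)
  show "bconfl C (P, e, e') (tcone_bcx (Suc (Suc k))) susp_bcx"
    unfolding bconfl_def tcone_bcx_def bmor_def
    using top.cone_incl_hom top.cone_incl_chain[OF P_zero_above] bot.cone_incl_chain[OF P_zero_above]
      top.cone_proj_hom top.cone_proj_chain[OF P_zero_above] bot.cone_proj_chain[OF P_zero_above]
      top.cone_incl_proj_confl[OF P_zero_above]
    by (intro exI[of _ "top.cone_incl k"] exI[of _ "top.cone_proj k"]) simp
qed (use target binacyc_mono[of k "Suc k" C] tcone_bcx_binacyc susp_bcx_binacyc in auto)

theorem cone_relation:
  "frag_of (P, e, e') + frag_of susp_bcx - (\<Sum>j<Suc k. frag_of (layer j)) \<in> K_sub C (Suc k)"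
  using K_sub_closed(2)[OF K_sub_closed(2)[OF K_sub_closed(4)[OF tcone_bcx_telescope[OF order.refl]
        cone_conflation] tcone_bcx_0] layer_Suc_k]
  by (simp add: algebra_simps)

end

context exact_cat
begin

text \<open>The cone relation for \<open>s = t = id\<close>, whose layers are diagonal.\<close>
lemma susp_relation:
  assumes X: "(P, d, d') \<in> binacyc C k"
  shows "frag_of (P, d, d') + frag_of (susp P, susp_diff P d, susp_diff P d') \<in> K_sub C (Suc k)"
proof -
  have ac: "acyclic C P d" "acyclic C P d'" using X unfolding binacyc_def by auto
  have "d n \<in> Mor C" "dom C (d n) = P (Suc n)" "cod C (d n) = P n"
    "d' n \<in> Mor C" "dom C (d' n) = P (Suc n)" "cod C (d' n) = P n" for n
    using acyclic_hom[OF ac(1)] acyclic_hom[OF ac(2)] homD by blast+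
  then interpret binary_involutive_ladder C k P d d' d d' "\<lambda>n. idm C (P n)" "\<lambda>n. idm C (P n)"
    by unfold_locales (use X acyclic_ob[OF ac(1)] in \<open>auto simp: id_hom\<close>)
  have "(\<Sum>j<Suc k. frag_of (elem_bcx j (P j) (idm C (P j)) (idm C (P j)))) \<in> K_sub C (Suc k)"
    using elem_bcx_diagonal acyclic_ob[OF ac(1)] by (intro K_sub_sum) auto
  then show ?thesis using cone_relation K_sub_closed(2) by fastforce
qed

lemma elem_bcx_neg_iso:
  assumes Q: "Q \<in> Ob C" and u: "u \<in> Hom Q Q" "u \<cdot> u = idm C Q" and v: "v \<in> Hom Q Q" "v \<cdot> v = idm C Q"
    and "Suc j \<le> k"
  shows "frag_of (elem_bcx j Q u v) - frag_of (elem_bcx j Q (neg u) (neg v)) \<in> K_sub C k"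
proof -
  define f where "f n = (if n = j then neg (idm C Q) else idm C (elem_ob j Q n))" for n
  have fh: "f n \<in> Hom (elem_ob j Q n) (elem_ob j Q n)" for n
    unfolding f_def elem_ob_def using Q neg_hom[of "idm C Q"] by (auto intro: id_hom)
  have ff: "f n \<cdot> f n = idm C (elem_ob j Q n)" for n
    unfolding f_def elem_ob_def using Q by auto
  have ch: "f n \<cdot> elem_diff j Q (neg w) n = elem_diff j Q w n \<cdot> f (Suc n)" if w: "w \<in> Hom Q Q" for w n
    using Q w[THEN homD(1)] w[THEN homD(2)] w[THEN homD(3)]
    unfolding f_def elem_diff_def elem_ob_def by auto
  have nu: "neg u \<in> Hom Q Q" "neg u \<cdot> neg u = idm C Q" "neg v \<in> Hom Q Q" "neg v \<cdot> neg v = idm C Q"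
    using u v neg_hom[of u] neg_hom[of v] by (auto simp: homs_iff)
  show ?thesis
    using K_sub_iso[OF elem_bcx_binacyc[OF Q nu assms(6), unfolded elem_bcx_def]
        elem_bcx_binacyc[OF Q u v assms(6), unfolded elem_bcx_def] fh fh ff ff ch[OF u(1)] ch[OF v(1)]]
    unfolding elem_bcx_def .
qed

text \<open>Suspension shifts an elementary complex up by one degree and negates its differentials.\<close>
lemma elem_bcx_shift_relation:
  assumes Q: "Q \<in> Ob C" and u: "u \<in> Hom Q Q" "u \<cdot> u = idm C Q" and v: "v \<in> Hom Q Q" "v \<cdot> v = idm C Q"
    and j: "Suc j \<le> k"
  shows "frag_of (elem_bcx (Suc j) Q u v) + frag_of (elem_bcx j Q u v) \<in> K_sub C (Suc k)"
proof -
  have "susp (elem_ob j Q) = elem_ob (Suc j) Q"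
    unfolding susp_def elem_ob_def by (auto intro!: ext)
  moreover have "susp_diff (elem_ob j Q) (elem_diff j Q w) = elem_diff (Suc j) Q (neg w)"
    if "w \<in> Hom Q Q" for w
  proof
    fix n show "susp_diff (elem_ob j Q) (elem_diff j Q w) n = elem_diff (Suc j) Q (neg w) n"
      unfolding susp_diff_def elem_diff_def elem_ob_def using Q that by (cases n) (auto simp: homs_iff)
  qed
  ultimately have susp: "(susp (elem_ob j Q), susp_diff (elem_ob j Q) (elem_diff j Q u),
      susp_diff (elem_ob j Q) (elem_diff j Q v)) = elem_bcx (Suc j) Q (neg u) (neg v)"
    unfolding elem_bcx_def using u(1) v(1) by simp
  have "frag_of (elem_bcx j Q u v) + frag_of (elem_bcx (Suc j) Q (neg u) (neg v)) \<in> K_sub C (Suc k)"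
    using susp_relation[OF elem_bcx_binacyc[OF Q u v j, unfolded elem_bcx_def]] unfolding elem_bcx_def susp .
  moreover have "frag_of (elem_bcx (Suc j) Q u v) - frag_of (elem_bcx (Suc j) Q (neg u) (neg v)) \<in> K_sub C (Suc k)"
    using elem_bcx_neg_iso[OF Q u v] j by simp
  ultimately have "(frag_of (elem_bcx j Q u v) + frag_of (elem_bcx (Suc j) Q (neg u) (neg v)))
      + (frag_of (elem_bcx (Suc j) Q u v) - frag_of (elem_bcx (Suc j) Q (neg u) (neg v))) \<in> K_sub C (Suc k)"
    by (rule K_sub_closed(2))
  then show ?thesis by (simp add: algebra_simps)
qed

lemma elem_bcx_sign_relation:
  assumes Q: "Q \<in> Ob C" and u: "u \<in> Hom Q Q" "u \<cdot> u = idm C Q" and v: "v \<in> Hom Q Q" "v \<cdot> v = idm C Q"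
  shows "j \<le> k \<Longrightarrow> frag_of (elem_bcx j Q u v) - frag_cmul ((-1) ^ j) (frag_of (elem_bcx 0 Q u v)) \<in> K_sub C (Suc k)"
proof (induction j)
  case (Suc j)
  let ?F = "\<lambda>j. frag_of (elem_bcx j Q u v)"
  have "frag_cmul ((-1) ^ Suc j) (?F 0) = - frag_cmul ((-1) ^ j) (?F 0)"
    by (simp del: minus_frag_cmul add: minus_frag_cmul[symmetric])
  then have "?F (Suc j) - frag_cmul ((-1) ^ Suc j) (?F 0) = (?F (Suc j) + ?F j) - (?F j - frag_cmul ((-1) ^ j) (?F 0))"
    by (simp del: minus_frag_cmul add: algebra_simps)
  also have "\<dots> \<in> K_sub C (Suc k)"
    using Suc by (rule_tac K_sub_closed(4)[OF elem_bcx_shift_relation[OF Q u v]]) simp_all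
  finally show ?case .
qed (simp add: K_sub_closed)

lemma ladder_relation_in_K_sub:
  assumes A: "(P, d, d') \<in> binacyc C k" and B: "(P, e, e') \<in> binacyc C k" and k: "1 \<le> k"
    and H: "\<forall>n. is_involution C (P n) (\<sigma> n) \<and> is_involution C (P n) (\<tau> n) \<and>
            \<sigma> n \<cdot> d n = e n \<cdot> \<sigma> (Suc n) \<and> \<tau> n \<cdot> d' n = e' n \<cdot> \<tau> (Suc n)"
  shows "frag_of (P, e, e') - frag_of (P, d, d')
        - (\<Sum>i\<in>{0..k}. frag_cmul ((-1) ^ i) (frag_of (pair2 C (P i) (\<sigma> i) (\<tau> i)))) \<in> K_sub C (Suc k)"
proof -
  have PO: "P n \<in> Ob C" for n using A acyclic_ob unfolding binacyc_def by blast
  have \<sigma>: "\<And>n. \<sigma> n \<in> Hom (P n) (P n)" "\<And>n. \<sigma> n \<cdot> \<sigma> n = idm C (P n)"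
    and \<tau>: "\<And>n. \<tau> n \<in> Hom (P n) (P n)" "\<And>n. \<tau> n \<cdot> \<tau> n = idm C (P n)"
    using H unfolding is_involution_def by auto
  interpret binary_involutive_ladder C k P d d' e e' \<sigma> \<tau>
    by unfold_locales (use A B H \<sigma> \<tau> in auto)
  define L where "L = (\<Sum>j<Suc k. frag_of (layer j))"
  define S where "S = (\<Sum>i\<in>{0..k}. frag_cmul ((-1) ^ i) (frag_of (pair2 C (P i) (\<sigma> i) (\<tau> i))))"
  have "L - S = (\<Sum>j<Suc k. frag_of (layer j) - frag_cmul ((-1) ^ j) (frag_of (elem_bcx 0 (P j) (\<sigma> j) (\<tau> j))))"
    unfolding L_def S_def pair2_eq_elem_bcx atLeast0AtMost lessThan_Suc_atMost by (simp add: sum_subtractf)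
  also have "\<dots> \<in> K_sub C (Suc k)"
    using elem_bcx_sign_relation[OF PO \<sigma> \<tau>] by (intro K_sub_sum) auto
  finally have "(frag_of (P, e, e') + frag_of susp_bcx - L) - (frag_of (P, d, d') + frag_of susp_bcx) + (L - S)
      \<in> K_sub C (Suc k)"
    using cone_relation susp_relation[OF A] K_sub_closed(2,4) unfolding L_def by blast
  then show ?thesis unfolding S_def[symmetric] by (simp add: algebra_simps)
qed

lemma ladder_rels_subset_K_sub: "1 \<le> k \<Longrightarrow> ladder_rels C k \<subseteq> K_sub C (Suc k)"
  unfolding ladder_rels_def by (auto intro!: ladder_relation_in_K_sub)

lemma ladder_rels_carrier:
  assumes "1 \<le> k" shows "ladder_rels C k \<subseteq> carrier (FA C k)"
proof
  fix x assume "x \<in> ladder_rels C k"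
  then obtain P d d' e e' \<sigma> \<tau> where x: "x = frag_of (P, e, e') - frag_of (P, d, d')
        - (\<Sum>i\<in>{0..k}. frag_cmul ((-1) ^ i) (frag_of (pair2 C (P i) (\<sigma> i) (\<tau> i))))"
    and A: "(P, d, d') \<in> binacyc C k" and B: "(P, e, e') \<in> binacyc C k"
    and H: "\<forall>n. is_involution C (P n) (\<sigma> n) \<and> is_involution C (P n) (\<tau> n)"
    unfolding ladder_rels_def by blast
  have "P n \<in> Ob C" for n using A acyclic_ob unfolding binacyc_def by blast
  then have "pair2 C (P i) (\<sigma> i) (\<tau> i) \<in> binacyc C k" for i
    unfolding pair2_eq_elem_bcx using H assms by (intro elem_bcx_binacyc) (auto simp: is_involution_def)
  then have "(\<Sum>i\<in>{0..k}. frag_cmul ((-1) ^ i) (frag_of (pair2 C (P i) (\<sigma> i) (\<tau> i)))) \<in> carrier (FA C k)"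
    by (intro sum_closed_free_Abelian_group) (auto dest: subsetD[OF keys_cmul])
  with A B show "x \<in> carrier (FA C k)"
    unfolding x by (intro free_Abelian_group_diff_closed) simp_all
qed

lemma L_sub_subgroup: "1 \<le> k \<Longrightarrow> subgroup (L_sub C k) (FA C k)"
  unfolding L_sub_def
  by (rule generate_free_Abelian_subgroup) (use B_rels_carrier diag_rels_carrier ladder_rels_carrier in blast)

lemma L_sub_subset_K_sub_Suc: "1 \<le> k \<Longrightarrow> L_sub C k \<subseteq> K_sub C (Suc k)"
  unfolding L_sub_def
proof (rule generate_free_Abelian_subset[OF _ K_sub_subgroup])
  assume "1 \<le> k"
  then show "B_rels C k \<union> diag_rels C k \<union> ladder_rels C k \<subseteq> carrier (FA C k)"
    using B_rels_carrier diag_rels_carrier ladder_rels_carrier by blast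
  have "B_rels C (Suc k) \<union> diag_rels C (Suc k) \<subseteq> K_sub C (Suc k)"
    unfolding K_sub_def by (auto intro: generate.incl)
  with \<open>1 \<le> k\<close> show "B_rels C k \<union> diag_rels C k \<union> ladder_rels C k \<subseteq> K_sub C (Suc k)"
    using B_rels_mono diag_rels_mono ladder_rels_subset_K_sub by blast
qed

end

lemma K_sub_subset_L_sub: "K_sub C k \<subseteq> L_sub C k"
  unfolding K_sub_def L_sub_def by (rule group.mono_generate[OF group_free_Abelian_group]) auto

theorem lemma3p3:
  fixes N :: "('o, 'm) excat" and k :: nat
  assumes "exact_category N" and "k \<ge> 1"
  shows "\<exists>\<phi> \<in> hom (L1 N k) (K1 N (Suc k)).
           (\<forall>X \<in> binacyc N k. \<phi> (Lcls N k X) = Kcls N (Suc k) X) \<and>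
           (\<exists>\<pi> \<in> hom (K1 N (Suc k)) (L1 N (Suc k)).
              \<pi> ` carrier (K1 N (Suc k)) = carrier (L1 N (Suc k)) \<and>
              (\<forall>X \<in> binacyc N (Suc k). \<pi> (Kcls N (Suc k) X) = Lcls N (Suc k) X) \<and>
              (\<forall>i \<in> hom (L1 N k) (L1 N (Suc k)).
                 (\<forall>X \<in> binacyc N k. i (Lcls N k X) = Lcls N (Suc k) X) \<longrightarrow>
                 (\<forall>x \<in> carrier (L1 N k). i x = \<pi> (\<phi> x))))"
proof -
  interpret exact_cat N by unfold_locales (fact assms(1))
  have sub: "binacyc N k \<subseteq> binacyc N (Suc k)" by (rule binacyc_mono) simp
  have L': "subgroup (L_sub N (Suc k)) (FA N (Suc k))" by (rule L_sub_subgroup) simp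
  obtain \<phi> \<pi> where \<phi>: "\<phi> \<in> hom (L1 N k) (K1 N (Suc k))"
      "\<And>X. X \<in> binacyc N k \<Longrightarrow> \<phi> (Lcls N k X) = Kcls N (Suc k) X"
    and \<pi>: "\<pi> \<in> hom (K1 N (Suc k)) (L1 N (Suc k))" "\<pi> ` carrier (K1 N (Suc k)) = carrier (L1 N (Suc k))"
      "\<And>X. X \<in> binacyc N (Suc k) \<Longrightarrow> \<pi> (Kcls N (Suc k) X) = Lcls N (Suc k) X"
    and factor: "\<And>i x. i \<in> hom (L1 N k) (L1 N (Suc k)) \<Longrightarrow>
       (\<forall>X \<in> binacyc N k. i (Lcls N k X) = Lcls N (Suc k) X) \<Longrightarrow> x \<in> carrier (L1 N k) \<Longrightarrow> i x = \<pi> (\<phi> x)"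
    unfolding L1_def K1_def Lcls_def Kcls_def
    by (rule free_Abelian_quotient_factorization[OF sub L_sub_subgroup[OF assms(2)] K_sub_subgroup
          L' L_sub_subset_K_sub_Suc[OF assms(2)] K_sub_subset_L_sub]) blast
  show ?thesis
    by (intro bexI[OF _ \<phi>(1)] bexI[OF _ \<pi>(1)] conjI ballI impI \<pi>(2)) (simp_all add: \<phi>(2) \<pi>(3) factor)
qed

end
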